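(* Let $X$ be a closed subspace of a real Banach space $Y$. The following are equivalent: (a) The pair $(X,Y)$ has the Daugavet property. (b) For every $\varepsilon>0$, every $y\in S(Y)$ and every weakly open set $U\subset X$ with $U\cap B(X)\neq\emptyset$, there is a weakly open set $V\subset X$ with $V\cap B(X)\neq\emptyset$ and $V\cap B(X)\subset U\cap B(X)$ such that $\|v+y\|>2-\varepsilon$ for every $v\in V\cap B(X)$. (c) For every $\varepsilon>0$, every $x^*\in S(X^* )$ and every weak$^*$ open set $U\subset Y^*$ with $U\cap B(Y^* )\neq\emptyset$, there is a weak$^*$ open set $V\subset Y^*$ with $V\cap B(Y^* )\neq\emptyset$ and $V\cap B(Y^* )\subset U\cap B(Y^* )$ such that $\|v|_X+x^*\|>2-\varepsilon$ for every $v\in V\cap B(Y^* )$.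
   Context: $B(Z)$ and $S(Z)$ denote the closed unit ball and unit sphere of a Banach space $Z$. If $X$ is a closed subspace of a Banach space $Y$ and $J:X\to Y$ is the inclusion map, the pair $(X,Y)$ is said to have the Daugavet property (to be a Daugavet pair) if every bounded linear operator $T:X\to Y$ of rank one satisfies $\|J+T\|=1+\|T\|$. For $v\in Y^*$, $v|_X$ denotes its restriction to $X$. *)

theory Defs
  imports "HOL-Analysis.Analysis"
begin

text \<open>Linear maps defined on a subspace X (values outside X are irrelevant).\<close>
definition lin_on :: "'a::real_vector set \<Rightarrow> ('a \<Rightarrow> 'b::real_vector) \<Rightarrow> bool" where
  "lin_on X T \<longleftrightarrow> (\<forall>x\<in>X. \<forall>y\<in>X. T (x + y) = T x + T y) \<and> (\<forall>c. \<forall>x\<in>X. T (c *\<^sub>R x) = c *\<^sub>R T x)"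

definition bdd_lin_on :: "'a::real_normed_vector set \<Rightarrow> ('a \<Rightarrow> 'b::real_normed_vector) \<Rightarrow> bool" where
  "bdd_lin_on X T \<longleftrightarrow> lin_on X T \<and> (\<exists>K. \<forall>x\<in>X. norm (T x) \<le> K * norm x)"

definition unit_ball_on :: "'a::real_normed_vector set \<Rightarrow> 'a set" where
  "unit_ball_on X = {x\<in>X. norm x \<le> 1}"

definition op_norm_on :: "'a::real_normed_vector set \<Rightarrow> ('a \<Rightarrow> 'b::real_normed_vector) \<Rightarrow> real" where
  "op_norm_on X T = (SUP x\<in>unit_ball_on X. norm (T x))"

definition daugavet_pair :: "'y::real_normed_vector set \<Rightarrow> bool" where
  "daugavet_pair X \<longleftrightarrow> (\<forall>T :: 'y \<Rightarrow> 'y. bdd_lin_on X T \<and> dim (span (T ` X)) = 1 \<longrightarrow>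
      op_norm_on X (\<lambda>x. x + T x) = 1 + op_norm_on X T)"

definition dual_on :: "'a::real_normed_vector set \<Rightarrow> ('a \<Rightarrow> real) set" where
  "dual_on X = {f. bdd_lin_on X f}"

definition weak_top :: "'a::real_normed_vector set \<Rightarrow> 'a topology" where
  "weak_top X = topology_generated_by {{x\<in>X. f x \<in> W} | f W. f \<in> dual_on X \<and> open W}"

definition dual_space :: "('a::real_normed_vector \<Rightarrow> real) set" where
  "dual_space = {v. bounded_linear v}"

definition weak_star_top :: "('a::real_normed_vector \<Rightarrow> real) topology" where
  "weak_star_top = topology_generated_by {{v\<in>dual_space. v y \<in> W} | y W. open W}"

definition dual_unit_ball :: "('a::real_normed_vector \<Rightarrow> real) set" where
  "dual_unit_ball = {v\<in>dual_space. onorm v \<le> 1}"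

end

theory Submission
  imports Defs
begin

text \<open>
  A rank-one operator \<open>T x = x\<^sup>*(x) y\<close> shows that \<open>(X, Y)\<close> is a Daugavet pair iff every slice
  \<open>{x \<in> B(X). x\<^sup>*(x) > 1 - \<epsilon>}\<close> contains some \<open>x\<close> with \<open>norm (x + y) > 2 - \<epsilon>\<close>; by Hahn--Banach
  this is equivalent to the analogous statement for weak-star slices of \<open>B(Y\<^sup>*)\<close>.

  To pass from slices to weakly open sets we use Bourgain's lemma: a relatively weakly open
  subset of the ball contains every convex combination \<open>\<Sum>\<lambda>\<^sub>j \<kappa>\<^sub>j\<close> of points taken from suitable
  finitely many slices. Applying the slice property slice after slice yields \<open>\<kappa>\<^sub>j\<close> with
  \<open>norm (y + \<Sum>\<kappa>\<^sub>j)\<close> close to its maximum \<open>1 + m\<close>. A functional norming this sum is then close to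
  \<open>1\<close> on \<open>y\<close>, on every \<open>\<kappa>\<^sub>j\<close> and hence on their convex combination, and the slice it defines
  inside the given open set is the required \<open>V\<close>. The weak-star case is symmetric.

  There it follows from the fact that the points of a bounded set which
  are almost farthest from some centre carry small slices.
\<close>

section \<open>The Hahn--Banach theorem\<close>

definition dominated_linear_graph :: "('a::real_normed_vector \<times> real) set \<Rightarrow> bool" where
  "dominated_linear_graph G \<longleftrightarrow> (0, 0) \<in> G
     \<and> (\<forall>x a y b. (x, a) \<in> G \<longrightarrow> (y, b) \<in> G \<longrightarrow> (x + y, a + b) \<in> G)
     \<and> (\<forall>x a c. (x, a) \<in> G \<longrightarrow> (c *\<^sub>R x, c * a) \<in> G)
     \<and> (\<forall>x a. (x, a) \<in> G \<longrightarrow> a \<le> norm x)"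

lemma dominated_linear_graphD:
  assumes "dominated_linear_graph G"
  shows "(0, 0) \<in> G"
    and "(x, a) \<in> G \<Longrightarrow> (y, b) \<in> G \<Longrightarrow> (x + y, a + b) \<in> G"
    and "(x, a) \<in> G \<Longrightarrow> (c *\<^sub>R x, c * a) \<in> G"
    and "(x, a) \<in> G \<Longrightarrow> a \<le> norm x"
  using assms unfolding dominated_linear_graph_def by blast+

lemma dominated_linear_graph_unique:
  assumes G: "dominated_linear_graph G" and "(x, a) \<in> G" "(x, b) \<in> G"
  shows "a = b"
proof -
  have "(x + (-1) *\<^sub>R x, a + (-1) * b) \<in> G" "(x + (-1) *\<^sub>R x, b + (-1) * a) \<in> G"
    using assms by (meson dominated_linear_graphD(2,3))+
  then have "a - b \<le> 0" "b - a \<le> 0"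
    using dominated_linear_graphD(4)[OF G] by fastforce+
  then show ?thesis by simp
qed

lemma dominated_linear_graph_Union:
  assumes "C \<noteq> {}" and dom: "\<And>G. G \<in> C \<Longrightarrow> dominated_linear_graph G"
    and chain: "\<And>G H. G \<in> C \<Longrightarrow> H \<in> C \<Longrightarrow> G \<subseteq> H \<or> H \<subseteq> G"
  shows "dominated_linear_graph (\<Union>C)"
proof -
  have common: "\<exists>G\<in>C. p \<in> G \<and> q \<in> G" if "p \<in> \<Union>C" "q \<in> \<Union>C" for p q
    using that chain by blast
  show ?thesis
    unfolding dominated_linear_graph_def
  proof (intro conjI allI impI)
    show "(0, 0) \<in> \<Union>C"
      using assms(1) dom dominated_linear_graphD(1) by blast
  next
    fix x a y b assume "(x, a) \<in> \<Union>C" "(y, b) \<in> \<Union>C"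
    then show "(x + y, a + b) \<in> \<Union>C"
      using common dom dominated_linear_graphD(2) by (metis UnionI)
  next
    fix x a c assume "(x, a) \<in> \<Union>C"
    then show "(c *\<^sub>R x, c * a) \<in> \<Union>C"
      using dom dominated_linear_graphD(3) by blast
  next
    fix x a assume "(x, a) \<in> \<Union>C"
    then show "a \<le> norm x"
      using dom dominated_linear_graphD(4) by blast
  qed
qed

lemma dominated_linear_graph_adjoin_le:
  assumes G: "dominated_linear_graph G" and xa: "(x, a) \<in> G"
    and r_ge: "\<And>x a. (x, a) \<in> G \<Longrightarrow> a - norm (x - z) \<le> r"
    and r_le: "\<And>w b. (w, b) \<in> G \<Longrightarrow> r \<le> norm (w + z) - b"
  shows "a + t * r \<le> norm (x + t *\<^sub>R z)"
proof (cases t "0 :: real" rule: linorder_cases)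
  case less
  have "x + t *\<^sub>R z = (- t) *\<^sub>R ((1 / - t) *\<^sub>R x - z)"
    using less by (simp add: scaleR_diff_right)
  then have "norm (x + t *\<^sub>R z) = - t * norm ((1 / - t) *\<^sub>R x - z)"
    using less by simp
  moreover have "(1 / - t) * a - norm ((1 / - t) *\<^sub>R x - z) \<le> r"
    using r_ge G xa by (meson dominated_linear_graphD(3))
  ultimately show ?thesis
    using less by (simp add: field_simps)
next
  case equal
  then show ?thesis using G xa by (simp add: dominated_linear_graphD(4))
next
  case greater
  have "x + t *\<^sub>R z = t *\<^sub>R ((1 / t) *\<^sub>R x + z)"
    using greater by (simp add: scaleR_add_right)
  then have "norm (x + t *\<^sub>R z) = t * norm ((1 / t) *\<^sub>R x + z)"
    using greater by simp
  moreover have "r \<le> norm ((1 / t) *\<^sub>R x + z) - (1 / t) * a"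
    using r_le G xa by (meson dominated_linear_graphD(3))
  ultimately show ?thesis
    using greater by (simp add: field_simps)
qed

lemma dominated_linear_graph_adjoin:
  assumes G: "dominated_linear_graph G"
    and r_ge: "\<And>x a. (x, a) \<in> G \<Longrightarrow> a - norm (x - z) \<le> r"
    and r_le: "\<And>w b. (w, b) \<in> G \<Longrightarrow> r \<le> norm (w + z) - b"
  shows "dominated_linear_graph {(x + t *\<^sub>R z, a + t * r) | x a t. (x, a) \<in> G}"
    (is "dominated_linear_graph ?G'")
proof -
  have memI: "(x + t *\<^sub>R z, a + t * r) \<in> ?G'" if "(x, a) \<in> G" for x a t
    using that by blast
  have memE: "\<exists>x1 a1 t. (x1, a1) \<in> G \<and> x = x1 + t *\<^sub>R z \<and> a = a1 + t * r" if "(x, a) \<in> ?G'" for x a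
    using that by blast
  show ?thesis
    unfolding dominated_linear_graph_def
  proof (intro conjI allI impI)
    show "(0, 0) \<in> ?G'" using memI[OF dominated_linear_graphD(1)[OF G], of 0] by simp
  next
    fix x a y b assume "(x, a) \<in> ?G'" "(y, b) \<in> ?G'"
    then obtain x1 a1 t1 x2 a2 t2 where "(x1, a1) \<in> G" "(x2, a2) \<in> G"
      and "x = x1 + t1 *\<^sub>R z" "a = a1 + t1 * r" "y = x2 + t2 *\<^sub>R z" "b = a2 + t2 * r"
      using memE by meson
    moreover have "(x1 + x2 + (t1 + t2) *\<^sub>R z, a1 + a2 + (t1 + t2) * r) \<in> ?G'"
      using calculation by (intro memI dominated_linear_graphD(2)[OF G])
    ultimately show "(x + y, a + b) \<in> ?G'" by (simp add: algebra_simps)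
  next
    fix x a c assume "(x, a) \<in> ?G'"
    then obtain x1 a1 t where "(x1, a1) \<in> G" "x = x1 + t *\<^sub>R z" "a = a1 + t * r"
      using memE by meson
    moreover have "(c *\<^sub>R x1 + (c * t) *\<^sub>R z, c * a1 + (c * t) * r) \<in> ?G'"
      using calculation by (intro memI dominated_linear_graphD(3)[OF G])
    ultimately show "(c *\<^sub>R x, c * a) \<in> ?G'" by (simp add: algebra_simps)
  next
    fix x a assume "(x, a) \<in> ?G'"
    then show "a \<le> norm x" using memE dominated_linear_graph_adjoin_le[OF G _ r_ge r_le] by blast
  qed
qed

lemma dominated_linear_graph_extend:
  assumes G: "dominated_linear_graph G" and z: "\<And>a. (z, a) \<notin> G"
  shows "\<exists>G'. dominated_linear_graph G' \<and> G \<subset> G'"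
proof -
  have key: "a - norm (x - z) \<le> norm (w + z) - b" if "(x, a) \<in> G" "(w, b) \<in> G" for x a w b
  proof -
    have "a + b \<le> norm (x + w)"
      using that by (meson G dominated_linear_graphD(2,4))
    also have "\<dots> \<le> norm (x - z) + norm (w + z)"
      using norm_triangle_ineq[of "x - z" "w + z"] by simp
    finally show ?thesis by simp
  qed
  have G00: "(0, 0) \<in> G" using G by (rule dominated_linear_graphD)
  define r where "r = (SUP p\<in>G. snd p - norm (fst p - z))"
  have bdd: "bdd_above ((\<lambda>p. snd p - norm (fst p - z)) ` G)"
    using key[OF _ G00] by (intro bdd_aboveI[where M = "norm z"]) auto
  have r_ge: "a - norm (x - z) \<le> r" if "(x, a) \<in> G" for x a
    unfolding r_def using cSUP_upper[OF that bdd] by simp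
  have r_le: "r \<le> norm (w + z) - b" if "(w, b) \<in> G" for w b
    unfolding r_def using key[OF _ that] G00 by (intro cSUP_least) auto
  define G' where "G' = {(x + t *\<^sub>R z, a + t * r) | x a t. (x, a) \<in> G}"
  have "dominated_linear_graph G'"
    unfolding G'_def using dominated_linear_graph_adjoin[OF G r_ge r_le] .
  moreover have "G \<subseteq> G'"
    unfolding G'_def by (force intro: exI[of _ 0])
  moreover have "(z, r) \<in> G'"
    unfolding G'_def using G00 by (force intro: exI[of _ 1])
  ultimately show ?thesis using z by blast
qed

lemma exists_total_dominated_linear_graph:
  assumes "dominated_linear_graph G0"
  obtains M where "dominated_linear_graph M" "G0 \<subseteq> M" "\<forall>x. \<exists>a. (x, a) \<in> M"
proof -
  define A where "A = {G. dominated_linear_graph G \<and> G0 \<subseteq> G}"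
  have "\<exists>U\<in>A. \<forall>G\<in>C. G \<subseteq> U" if C: "C \<in> chains A" for C
  proof (cases "C = {}")
    case True
    then show ?thesis using assms unfolding A_def by blast
  next
    case False
    then have "dominated_linear_graph (\<Union>C)"
      using C by (intro dominated_linear_graph_Union) (auto simp: A_def dest: chainsD chainsD2)
    moreover have "G0 \<subseteq> \<Union>C" using C False by (auto simp: A_def dest: chainsD2)
    ultimately show ?thesis unfolding A_def by blast
  qed
  then have "\<exists>M\<in>A. \<forall>G\<in>A. M \<subseteq> G \<longrightarrow> G = M"
    by (intro Zorn_Lemma2) blast
  then obtain M where "M \<in> A" and M_max: "\<And>G. G \<in> A \<Longrightarrow> M \<subseteq> G \<Longrightarrow> G = M"
    by blast
  then have M: "dominated_linear_graph M" and "G0 \<subseteq> M" by (auto simp: A_def)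
  moreover have "\<forall>x. \<exists>a. (x, a) \<in> M"
  proof (rule ccontr)
    assume "\<not> (\<forall>x. \<exists>a. (x, a) \<in> M)"
    then obtain x where "\<nexists>a. (x, a) \<in> M" by blast
    then obtain G' where "dominated_linear_graph G'" "M \<subset> G'"
      using dominated_linear_graph_extend[OF M] by blast
    then show False using M_max \<open>G0 \<subseteq> M\<close> unfolding A_def by blast
  qed
  ultimately show ?thesis using that by blast
qed

lemma dominated_linear_graph_line:
  "dominated_linear_graph (range (\<lambda>c. (c *\<^sub>R y, c * norm y)))"
  unfolding dominated_linear_graph_def
proof (intro conjI allI impI; (elim rangeE)?)
  show "(0, 0) \<in> range (\<lambda>c. (c *\<^sub>R y, c * norm y))"
    by (rule range_eqI[of _ _ 0]) simp
next
  fix x a x' b c d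
  assume "(x, a) = (c *\<^sub>R y, c * norm y)" "(x', b) = (d *\<^sub>R y, d * norm y)"
  then show "(x + x', a + b) \<in> range (\<lambda>c. (c *\<^sub>R y, c * norm y))"
    by (intro range_eqI[of _ _ "c + d"]) (simp add: algebra_simps)
next
  fix x a e c
  assume "(x, a) = (c *\<^sub>R y, c * norm y)"
  then show "(e *\<^sub>R x, e * a) \<in> range (\<lambda>c. (c *\<^sub>R y, c * norm y))"
    by (intro range_eqI[of _ _ "e * c"]) simp
next
  fix x a c
  assume "(x, a) = (c *\<^sub>R y, c * norm y)"
  then show "a \<le> norm x" by (simp add: mult_right_mono)
qed

lemma exists_norming_functional:
  fixes y :: "'a::real_normed_vector"
  obtains f where "bounded_linear f" "\<And>x. \<bar>f x\<bar> \<le> norm x" "f y = norm y"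
proof -
  define G0 where "G0 = range (\<lambda>c. (c *\<^sub>R y, c * norm y))"
  have "dominated_linear_graph G0"
    unfolding G0_def by (rule dominated_linear_graph_line)
  then obtain M where M: "dominated_linear_graph M" "G0 \<subseteq> M" and total: "\<forall>x. \<exists>a. (x, a) \<in> M"
    by (rule exists_total_dominated_linear_graph)
  define f where "f x = (THE a. (x, a) \<in> M)" for x
  have graph: "(x, a) \<in> M \<longleftrightarrow> a = f x" for x a
    unfolding f_def using total dominated_linear_graph_unique[OF M(1)]
    by (metis (mono_tags, lifting) theI)
  have add: "f (x + x') = f x + f x'" for x x'
    using graph dominated_linear_graphD(2)[OF M(1)] by metis
  have scale: "f (c *\<^sub>R x) = c * f x" for c x
    using graph dominated_linear_graphD(3)[OF M(1)] by metis
  have abs_le: "\<bar>f x\<bar> \<le> norm x" for x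
    using graph dominated_linear_graphD(4)[OF M(1)] scale[of "-1" x]
    by (metis abs_le_iff mult_minus1 norm_minus_cancel scaleR_minus1_left)
  have "bounded_linear f"
    by (rule bounded_linear_intro[where K = 1]) (use add scale abs_le in auto)
  moreover have "(1 *\<^sub>R y, 1 * norm y) \<in> G0"
    unfolding G0_def by (rule rangeI)
  then have "f y = norm y"
    using M(2) graph by auto
  ultimately show ?thesis using that abs_le by blast
qed

section \<open>Unit balls and operator norms on a subspace\<close>

lemma mem_unit_ball_on: "x \<in> unit_ball_on X \<longleftrightarrow> x \<in> X \<and> norm x \<le> 1"
  by (simp add: unit_ball_on_def)

lemma zero_in_unit_ball_on: "subspace X \<Longrightarrow> 0 \<in> unit_ball_on X"
  by (simp add: mem_unit_ball_on subspace_0)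

lemma convex_unit_ball_on: "subspace X \<Longrightarrow> convex (unit_ball_on X)"
proof -
  assume "subspace X"
  then have "convex (X \<inter> cball 0 1)" by (simp add: convex_Int subspace_imp_convex)
  moreover have "X \<inter> cball 0 1 = unit_ball_on X" by (auto simp: mem_unit_ball_on)
  ultimately show ?thesis by simp
qed

lemma mem_dual_unit_ball: "v \<in> dual_unit_ball \<longleftrightarrow> bounded_linear v \<and> (\<forall>x. \<bar>v x\<bar> \<le> norm x)"
proof
  assume "v \<in> dual_unit_ball"
  then have v: "bounded_linear v" "onorm v \<le> 1"
    by (auto simp: dual_unit_ball_def dual_space_def)
  have "\<bar>v x\<bar> \<le> norm x" for x
    using onorm[OF v(1), of x] mult_right_mono[OF v(2) norm_ge_zero[of x]] by simp
  with v show "bounded_linear v \<and> (\<forall>x. \<bar>v x\<bar> \<le> norm x)" by blast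
qed (auto simp: dual_unit_ball_def dual_space_def intro: onorm_bound)

text \<open>\<open>op_norm_on X T\<close> is a supremum in the reals, so it is meaningful only for operators
  bounded on the unit ball.\<close>
definition op_bounded_on :: "'a::real_normed_vector set \<Rightarrow> ('a \<Rightarrow> 'b::real_normed_vector) \<Rightarrow> bool" where
  "op_bounded_on X T \<longleftrightarrow> bdd_above ((\<lambda>x. norm (T x)) ` unit_ball_on X)"

lemma op_norm_on_upper:
  "op_bounded_on X T \<Longrightarrow> x \<in> unit_ball_on X \<Longrightarrow> norm (T x) \<le> op_norm_on X T"
  unfolding op_norm_on_def op_bounded_on_def by (rule cSUP_upper)

lemma op_norm_on_least:
  "subspace X \<Longrightarrow> (\<And>x. x \<in> unit_ball_on X \<Longrightarrow> norm (T x) \<le> b) \<Longrightarrow> op_norm_on X T \<le> b"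
  unfolding op_norm_on_def
  by (rule cSUP_least) (auto dest: zero_in_unit_ball_on)

lemma op_norm_on_approx:
  assumes "subspace X" "op_bounded_on X T" "r < op_norm_on X T"
  shows "\<exists>x\<in>unit_ball_on X. r < norm (T x)"
  using assms less_cSUP_iff[of "unit_ball_on X" "\<lambda>x. norm (T x)"] zero_in_unit_ball_on[of X]
  unfolding op_norm_on_def op_bounded_on_def by blast

lemma op_norm_on_cong:
  "(\<And>x. x \<in> X \<Longrightarrow> norm (T x) = norm (T' x)) \<Longrightarrow> op_norm_on X T = op_norm_on X T'"
  unfolding op_norm_on_def by (rule SUP_cong) (auto simp: mem_unit_ball_on)

lemma op_norm_on_divide:
  fixes f :: "'a::real_normed_vector \<Rightarrow> real"
  assumes "subspace X" "op_bounded_on X f" "c > 0"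
  shows "op_norm_on X (\<lambda>x. f x / c) = op_norm_on X f / c"
proof -
  have "(\<lambda>u. u / c) (Sup ((\<lambda>x. norm (f x)) ` unit_ball_on X))
      = Sup ((\<lambda>u. u / c) ` (\<lambda>x. norm (f x)) ` unit_ball_on X)"
    using assms unfolding op_bounded_on_def
    by (intro continuous_at_Sup_mono monoI divide_right_mono continuous_intros)
      (auto dest: zero_in_unit_ball_on)
  then show ?thesis
    using \<open>c > 0\<close> unfolding op_norm_on_def image_image by simp
qed

lemma op_bounded_on_bounded_linear: "bounded_linear T \<Longrightarrow> op_bounded_on X T"
proof -
  assume T: "bounded_linear T"
  have "norm (T x) \<le> onorm T" if "norm x \<le> 1" for x
    using onorm[OF T, of x] mult_left_le[OF that onorm_pos_le[OF T]] by linarith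
  then show ?thesis
    unfolding op_bounded_on_def by (intro bdd_aboveI[where M = "onorm T"]) (auto simp: mem_unit_ball_on)
qed

lemma op_bounded_on_bdd_lin_on:
  assumes "bdd_lin_on X T"
  shows "op_bounded_on X T"
proof -
  obtain K where K: "\<forall>x\<in>X. norm (T x) \<le> K * norm x"
    using assms unfolding bdd_lin_on_def by blast
  have "norm (T x) \<le> \<bar>K\<bar>" if "x \<in> unit_ball_on X" for x
  proof -
    have "norm (T x) \<le> K * norm x" using K that by (simp add: mem_unit_ball_on)
    also have "\<dots> \<le> \<bar>K\<bar> * 1" using that by (intro mult_mono) (auto simp: mem_unit_ball_on)
    finally show ?thesis by simp
  qed
  then show ?thesis
    unfolding op_bounded_on_def by (intro bdd_aboveI[where M = "\<bar>K\<bar>"]) auto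
qed

lemma op_bounded_on_add:
  assumes "op_bounded_on X T" "op_bounded_on X T'"
  shows "op_bounded_on X (\<lambda>x. T x + T' x)"
proof -
  obtain B B' where "\<forall>x\<in>unit_ball_on X. norm (T x) \<le> B" "\<forall>x\<in>unit_ball_on X. norm (T' x) \<le> B'"
    using assms unfolding op_bounded_on_def bdd_above_def by auto
  then show ?thesis
    unfolding op_bounded_on_def
    by (intro bdd_aboveI[where M = "B + B'"]) (auto intro: norm_triangle_le add_mono)
qed

lemma op_norm_on_nonneg: "subspace X \<Longrightarrow> op_bounded_on X T \<Longrightarrow> 0 \<le> op_norm_on X T"
  using op_norm_on_upper[of X T 0] zero_in_unit_ball_on[of X] norm_ge_zero[of "T 0"]
  by linarith

lemma norm_le_op_norm_on:
  assumes X: "subspace X" and T: "lin_on X T" "op_bounded_on X T" and x: "x \<in> X"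
  shows "norm (T x) \<le> op_norm_on X T * norm x"
proof (cases "x = 0")
  case True
  then have "T x = 0 *\<^sub>R T 0" using T(1) X x unfolding lin_on_def by (metis scaleR_zero_left)
  then show ?thesis using True by simp
next
  case False
  define u where "u = (1 / norm x) *\<^sub>R x"
  have "u \<in> unit_ball_on X" unfolding u_def using X x by (simp add: mem_unit_ball_on subspace_scale)
  moreover have "T x = norm x *\<^sub>R T u"
    unfolding u_def using T(1) x False unfolding lin_on_def by simp
  ultimately show ?thesis
    using op_norm_on_upper[OF T(2)] by (simp add: mult.commute mult_left_mono)
qed

lemma lin_on_sum_scaleR:
  assumes "subspace X" "lin_on X f" "finite J" "\<And>j. j \<in> J \<Longrightarrow> a j \<in> X"
  shows "f (\<Sum>j\<in>J. c j *\<^sub>R a j) = (\<Sum>j\<in>J. c j *\<^sub>R f (a j))"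
  using assms(3,4)
proof (induction J rule: finite_induct)
  case empty
  then show ?case using assms(1,2) unfolding lin_on_def by (metis scaleR_zero_left subspace_0 sum.empty)
next
  case (insert j J)
  then have "(\<Sum>j\<in>J. c j *\<^sub>R a j) \<in> X" "c j *\<^sub>R a j \<in> X"
    using assms(1) by (auto intro: subspace_sum subspace_scale)
  then show ?case using insert assms(2) unfolding lin_on_def by simp
qed

lemma dual_on_bounded_linear: "bounded_linear f \<Longrightarrow> f \<in> dual_on X"
  unfolding dual_on_def bdd_lin_on_def lin_on_def
  using onorm[of f] by (auto simp: linear_add linear_scale bounded_linear.linear mult.commute)

lemma dual_on_add:
  assumes "f \<in> dual_on X" "g \<in> dual_on X"
  shows "(\<lambda>x. f x + g x) \<in> dual_on X"
proof -
  obtain K L where "\<forall>x\<in>X. \<bar>f x\<bar> \<le> K * norm x" "\<forall>x\<in>X. \<bar>g x\<bar> \<le> L * norm x"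
    using assms by (auto simp: dual_on_def bdd_lin_on_def)
  then have "\<forall>x\<in>X. \<bar>f x + g x\<bar> \<le> (K + L) * norm x"
    by (auto simp: distrib_right intro: abs_triangle_ineq[THEN order_trans] add_mono)
  moreover have "lin_on X (\<lambda>x. f x + g x)"
    using assms by (auto simp: dual_on_def bdd_lin_on_def lin_on_def algebra_simps)
  ultimately show ?thesis by (auto simp: dual_on_def bdd_lin_on_def)
qed

lemma dual_on_cmult:
  assumes "f \<in> dual_on X"
  shows "(\<lambda>x. c * f x) \<in> dual_on X"
proof -
  obtain K where "\<forall>x\<in>X. \<bar>f x\<bar> \<le> K * norm x"
    using assms by (auto simp: dual_on_def bdd_lin_on_def)
  then have "\<forall>x\<in>X. \<bar>c * f x\<bar> \<le> (\<bar>c\<bar> * K) * norm x"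
    by (auto simp: abs_mult mult.assoc mult_left_mono)
  moreover have "lin_on X (\<lambda>x. c * f x)"
    using assms by (auto simp: dual_on_def bdd_lin_on_def lin_on_def algebra_simps)
  ultimately show ?thesis by (auto simp: dual_on_def bdd_lin_on_def)
qed

lemma dual_on_sum:
  "finite J \<Longrightarrow> (\<And>j. j \<in> J \<Longrightarrow> f j \<in> dual_on X) \<Longrightarrow> (\<lambda>x. \<Sum>j\<in>J. f j x) \<in> dual_on X"
proof (induction J rule: finite_induct)
  case empty
  then show ?case using dual_on_bounded_linear[of "\<lambda>x. 0"] by simp
next
  case (insert j J)
  then show ?case using dual_on_add[of "f j" X] by simp
qed

lemma dual_on_comp:
  assumes "bounded_linear \<phi>" "bdd_lin_on X T"
  shows "(\<lambda>x. \<phi> (T x)) \<in> dual_on X"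
proof -
  obtain K where K: "\<forall>x\<in>X. norm (T x) \<le> K * norm x" and "lin_on X T"
    using assms(2) unfolding bdd_lin_on_def by blast
  then have "lin_on X (\<lambda>x. \<phi> (T x))"
    using assms(1) unfolding lin_on_def by (simp add: bounded_linear.linear linear_add linear_scale)
  moreover have "norm (\<phi> (T x)) \<le> (onorm \<phi> * K) * norm x" if "x \<in> X" for x
    using onorm[OF assms(1), of "T x"] K that onorm_pos_le[OF assms(1)]
    by (simp add: mult.assoc) (meson mult_left_mono order_trans)
  ultimately show ?thesis unfolding dual_on_def bdd_lin_on_def by blast
qed

lemma dual_on_op_bounded_on: "f \<in> dual_on X \<Longrightarrow> op_bounded_on X f"
  unfolding dual_on_def by (simp add: op_bounded_on_bdd_lin_on)

lemma dual_on_abs_le: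
  "f \<in> dual_on X \<Longrightarrow> x \<in> unit_ball_on X \<Longrightarrow> \<bar>f x\<bar> \<le> op_norm_on X f"
  using op_norm_on_upper[OF dual_on_op_bounded_on] by fastforce

lemma dual_on_approx:
  assumes X: "subspace X" and f: "f \<in> dual_on X" and r: "r < op_norm_on X f"
  shows "\<exists>x\<in>unit_ball_on X. r < f x"
proof -
  obtain x where x: "x \<in> unit_ball_on X" "r < \<bar>f x\<bar>"
    using op_norm_on_approx[OF X dual_on_op_bounded_on[OF f] r] by auto
  define s :: real where "s = (if f x \<ge> 0 then 1 else -1)"
  have "s *\<^sub>R x \<in> unit_ball_on X"
    using x X by (auto simp: s_def mem_unit_ball_on subspace_scale)
  moreover have "f (s *\<^sub>R x) = \<bar>f x\<bar>"
    using f x unfolding dual_on_def bdd_lin_on_def lin_on_def by (auto simp: s_def mem_unit_ball_on)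
  ultimately show ?thesis using x by metis
qed

lemma dual_on_normalize:
  assumes "subspace X" "f \<in> dual_on X" "op_norm_on X f > 0"
  shows "(\<lambda>x. f x / op_norm_on X f) \<in> dual_on X" "op_norm_on X (\<lambda>x. f x / op_norm_on X f) = 1"
  using dual_on_cmult[OF assms(2), of "1 / op_norm_on X f"]
    op_norm_on_divide[OF assms(1) dual_on_op_bounded_on[OF assms(2)] assms(3)] assms(3)
  by simp_all

lemma exists_unit_functional_on:
  assumes X: "subspace X" "X \<noteq> {0}"
  obtains f where "f \<in> dual_on X" "op_norm_on X f = 1"
proof -
  obtain x where x: "x \<in> X" "x \<noteq> 0" using X subspace_0 by blast
  define u where "u = (1 / norm x) *\<^sub>R x"
  have u: "u \<in> unit_ball_on X" "norm u = 1"
    unfolding u_def using X x by (auto simp: mem_unit_ball_on subspace_scale)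
  obtain f where f: "bounded_linear f" "\<And>x. \<bar>f x\<bar> \<le> norm x" "f u = norm u"
    using exists_norming_functional[of u] by blast
  have "op_norm_on X f \<le> 1"
    using f(2) by (intro op_norm_on_least[OF X(1)]) (auto simp: mem_unit_ball_on intro: order_trans)
  moreover have "1 \<le> op_norm_on X f"
    using op_norm_on_upper[OF op_bounded_on_bounded_linear[OF f(1)] u(1)] f(3) u(2) by simp
  ultimately show ?thesis by (intro that[OF dual_on_bounded_linear[OF f(1)]]) simp
qed

section \<open>Daugavet pairs and slices\<close>

lemma dim_eq_1_iff:
  fixes S :: "'a::real_vector set"
  shows "dim S = 1 \<longleftrightarrow> (\<exists>w. w \<noteq> 0 \<and> S \<subseteq> span {w} \<and> (\<exists>s\<in>S. s \<noteq> 0))"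
proof
  assume "dim S = 1"
  obtain B where B: "B \<subseteq> S" "independent B" "S \<subseteq> span B" "card B = dim S"
    using basis_exists[of S] by blast
  with \<open>dim S = 1\<close> obtain w where "B = {w}" by (metis card_1_singletonE)
  then show "\<exists>w. w \<noteq> 0 \<and> S \<subseteq> span {w} \<and> (\<exists>s\<in>S. s \<noteq> 0)"
    using B by (auto simp: dependent_single)
next
  assume "\<exists>w. w \<noteq> 0 \<and> S \<subseteq> span {w} \<and> (\<exists>s\<in>S. s \<noteq> 0)"
  then obtain w s where w: "w \<noteq> 0" "S \<subseteq> span {w}" and s: "s \<in> S" "s \<noteq> 0" by blast
  then obtain c where "s = c *\<^sub>R w" "c \<noteq> 0" by (auto simp: span_singleton)
  then have "w = (1 / c) *\<^sub>R s" by simp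
  then have "w \<in> span S" using s(1) by (simp add: span_base span_scale)
  then have "span S = span {w}" using w(2) by (simp add: span_eq span_minimal)
  then have "dim S = dim {w}" by (metis dim_span)
  then show "dim S = 1" using w(1) by (simp add: dim_eq_card_independent)
qed

text \<open>A functional norming \<open>u + y\<close> almost norms \<open>u\<close> and \<open>y\<close> separately.\<close>
lemma norm_add_scaleR_ge:
  fixes u y :: "'a::real_normed_vector"
  assumes "norm u \<le> 1" "norm y \<le> 1" "c \<ge> 0" "norm (u + y) > 2 - e"
  shows "norm (u + c *\<^sub>R y) \<ge> (1 + c) * (1 - e)"
proof -
  obtain \<psi> where \<psi>: "bounded_linear \<psi>" "\<And>x. \<bar>\<psi> x\<bar> \<le> norm x" "\<psi> (u + y) = norm (u + y)"
    using exists_norming_functional[of "u + y"] by blast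
  have "\<psi> u \<le> 1" "\<psi> y \<le> 1"
    using \<psi>(2)[of u] \<psi>(2)[of y] assms(1,2) by (auto simp: abs_le_iff)
  moreover have "\<psi> u + \<psi> y > 2 - e"
    using \<psi>(1,3) assms(4) by (simp add: linear_add bounded_linear.linear)
  ultimately have "1 - e \<le> \<psi> u" "c * (1 - e) \<le> c * \<psi> y"
    using assms(3) by (auto intro: mult_left_mono)
  then have "(1 + c) * (1 - e) \<le> \<psi> (u + c *\<^sub>R y)"
    using \<psi>(1) by (simp add: linear_add linear_scale bounded_linear.linear algebra_simps)
  also have "\<dots> \<le> norm (u + c *\<^sub>R y)"
    using \<psi>(2) abs_le_D1 by blast
  finally show ?thesis .
qed

definition daugavet_slices :: "'y::real_normed_vector set \<Rightarrow> bool" where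
  "daugavet_slices X \<longleftrightarrow> (\<forall>\<epsilon>>0. \<forall>y. norm y = 1 \<longrightarrow> (\<forall>xs\<in>dual_on X. op_norm_on X xs = 1 \<longrightarrow>
     (\<exists>x\<in>unit_ball_on X. xs x > 1 - \<epsilon> \<and> norm (x + y) > 2 - \<epsilon>)))"

lemma daugavet_slicesD:
  "daugavet_slices X \<Longrightarrow> \<epsilon> > 0 \<Longrightarrow> norm y = 1 \<Longrightarrow> xs \<in> dual_on X \<Longrightarrow> op_norm_on X xs = 1
    \<Longrightarrow> \<exists>x\<in>unit_ball_on X. xs x > 1 - \<epsilon> \<and> norm (x + y) > 2 - \<epsilon>"
  unfolding daugavet_slices_def by blast

lemma daugavet_pair_rank_one:
  assumes X: "subspace X" and D: "daugavet_pair X"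
    and xs: "xs \<in> dual_on X" "op_norm_on X xs = 1" and y: "norm y = 1"
  shows "op_norm_on X (\<lambda>x. x + xs x *\<^sub>R y) = 2"
proof -
  have "lin_on X xs" and "\<exists>K. \<forall>x\<in>X. \<bar>xs x\<bar> \<le> K * norm x"
    using xs(1) by (auto simp: dual_on_def bdd_lin_on_def)
  then have "bdd_lin_on X (\<lambda>x. xs x *\<^sub>R y)"
    using y unfolding bdd_lin_on_def lin_on_def by (simp add: scaleR_add_left)
  moreover obtain x1 where "x1 \<in> unit_ball_on X" "0 < xs x1"
    using dual_on_approx[OF X xs(1), of 0] xs(2) by auto
  then have "dim (span ((\<lambda>x. xs x *\<^sub>R y) ` X)) = 1"
    unfolding dim_span dim_eq_1_iff
  proof (intro exI[of _ y] conjI)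
    show "y \<noteq> 0" using y by auto
    show "(\<lambda>x. xs x *\<^sub>R y) ` X \<subseteq> span {y}" by (auto intro: span_base span_scale)
    show "\<exists>s\<in>(\<lambda>x. xs x *\<^sub>R y) ` X. s \<noteq> 0"
      using \<open>x1 \<in> unit_ball_on X\<close> \<open>0 < xs x1\<close> y
      by (intro bexI[of _ "xs x1 *\<^sub>R y"]) (auto simp: mem_unit_ball_on)
  qed
  moreover have "op_norm_on X (\<lambda>x. xs x *\<^sub>R y) = 1"
    using xs(2) y op_norm_on_cong[of X "\<lambda>x. xs x *\<^sub>R y" xs] by simp
  ultimately show ?thesis
    using D unfolding daugavet_pair_def by simp
qed

lemma daugavet_pair_imp_slices:
  fixes X :: "'a::real_normed_vector set"
  assumes X: "subspace X" and D: "daugavet_pair X"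
  shows "daugavet_slices X"
  unfolding daugavet_slices_def
proof (intro allI impI ballI)
  fix \<epsilon> :: real and y :: 'a and xs
  assume \<epsilon>: "\<epsilon> > 0" and y: "norm y = 1" and xs: "xs \<in> dual_on X" "op_norm_on X xs = 1"
  have "op_bounded_on X (\<lambda>x. x + xs x *\<^sub>R y)"
    using xs(1) by (intro op_bounded_on_add op_bounded_on_bounded_linear bounded_linear_ident
        op_bounded_on_bdd_lin_on) (auto simp: dual_on_def bdd_lin_on_def lin_on_def y scaleR_add_left)
  then obtain x where x: "x \<in> unit_ball_on X" "norm (x + xs x *\<^sub>R y) > 2 - \<epsilon> / 2"
    using op_norm_on_approx[OF X, of "\<lambda>x. x + xs x *\<^sub>R y" "2 - \<epsilon> / 2"]
      daugavet_pair_rank_one[OF X D xs y] \<epsilon> by auto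
  have "norm (x + xs x *\<^sub>R y) \<le> norm x + \<bar>xs x\<bar>"
    using norm_triangle_ineq[of x "xs x *\<^sub>R y"] y by simp
  then have big: "\<bar>xs x\<bar> > 1 - \<epsilon> / 2" using x by (simp add: mem_unit_ball_on)
  define s :: real where "s = (if xs x \<ge> 0 then 1 else -1)"
  have x': "s *\<^sub>R x \<in> unit_ball_on X" "xs (s *\<^sub>R x) = \<bar>xs x\<bar>"
    using x X xs(1) by (auto simp: s_def mem_unit_ball_on subspace_scale dual_on_def bdd_lin_on_def lin_on_def)
  have "s *\<^sub>R x + xs (s *\<^sub>R x) *\<^sub>R y = s *\<^sub>R (x + xs x *\<^sub>R y)"
    using xs(1) x(1) by (simp add: dual_on_def bdd_lin_on_def lin_on_def mem_unit_ball_on scaleR_add_right)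
  then have "norm (s *\<^sub>R x + xs (s *\<^sub>R x) *\<^sub>R y) = norm (x + xs x *\<^sub>R y)"
    by (simp add: s_def)
  moreover have "\<bar>xs x\<bar> \<le> 1" using dual_on_abs_le[OF xs(1) x(1)] xs(2) by simp
  moreover have "norm (s *\<^sub>R x + y) \<ge> norm (s *\<^sub>R x + xs (s *\<^sub>R x) *\<^sub>R y) - norm ((1 - xs (s *\<^sub>R x)) *\<^sub>R y)"
    using norm_triangle_ineq2[of "s *\<^sub>R x + xs (s *\<^sub>R x) *\<^sub>R y" "(xs (s *\<^sub>R x) - 1) *\<^sub>R y"]
    by (simp add: algebra_simps norm_minus_commute)
  ultimately have "norm (s *\<^sub>R x + y) > 2 - \<epsilon>"
    using x(2) big x'(2) y by simp
  then show "\<exists>x\<in>unit_ball_on X. xs x > 1 - \<epsilon> \<and> norm (x + y) > 2 - \<epsilon>"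
    using x' big \<epsilon> by (intro bexI[of _ "s *\<^sub>R x"]) auto
qed

lemma rank_one_on_representation:
  assumes X: "subspace X" and T: "bdd_lin_on X T" "dim (span (T ` X)) = 1"
  obtains g y where "g \<in> dual_on X" "op_norm_on X g = 1" "norm y = 1"
    "\<And>x. x \<in> X \<Longrightarrow> T x = (op_norm_on X T * g x) *\<^sub>R y"
proof -
  obtain w x0 where w: "w \<noteq> 0" "T ` X \<subseteq> span {w}" and x0: "x0 \<in> X" "T x0 \<noteq> 0"
    using T(2) unfolding dim_span dim_eq_1_iff by blast
  define y where "y = (1 / norm w) *\<^sub>R w"
  have y: "norm y = 1"
    using w(1) unfolding y_def by simp
  obtain \<psi> where \<psi>: "bounded_linear \<psi>" "\<psi> y = norm y"
    using exists_norming_functional[of y] by blast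
  define f where "f x = \<psi> (T x)" for x
  have f: "f \<in> dual_on X" unfolding f_def using dual_on_comp[OF \<psi>(1) T(1)] .
  have Tf: "T x = f x *\<^sub>R y" if x: "x \<in> X" for x
  proof -
    obtain k where "T x = k *\<^sub>R w" using w(2) x by (auto simp: span_singleton)
    then have "T x = (k * norm w) *\<^sub>R y" using w(1) unfolding y_def by simp
    then show ?thesis unfolding f_def using \<psi> y(1) by (simp add: linear_scale bounded_linear.linear)
  qed
  have nT: "op_norm_on X T = op_norm_on X f"
    using Tf y(1) by (intro op_norm_on_cong) simp
  have "0 < op_norm_on X f"
  proof -
    have "\<bar>f x0\<bar> \<le> op_norm_on X f * norm x0"
      using norm_le_op_norm_on[OF X _ dual_on_op_bounded_on[OF f] x0(1)] f
      by (simp add: dual_on_def bdd_lin_on_def)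
    moreover have "f x0 \<noteq> 0" using Tf[OF x0(1)] x0(2) by auto
    ultimately show ?thesis by (smt (verit) mult_nonpos_nonneg norm_ge_zero)
  qed
  moreover define g where "g = (\<lambda>x. f x / op_norm_on X f)"
  ultimately have "g \<in> dual_on X" "op_norm_on X g = 1"
    unfolding g_def using dual_on_normalize[OF X f] by blast+
  moreover have "T x = (op_norm_on X T * g x) *\<^sub>R y" if "x \<in> X" for x
    using Tf[OF that] nT \<open>0 < op_norm_on X f\<close> by (simp add: g_def)
  ultimately show ?thesis using that y(1) by blast
qed

lemma slices_imp_daugavet_pair:
  assumes X: "subspace X" and S: "daugavet_slices X"
  shows "daugavet_pair X"
  unfolding daugavet_pair_def
proof (intro allI impI, elim conjE)
  fix T :: "'a \<Rightarrow> 'a" assume T: "bdd_lin_on X T" "dim (span (T ` X)) = 1"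
  define c where "c = op_norm_on X T"
  obtain g y where g: "g \<in> dual_on X" "op_norm_on X g = 1" and y: "norm y = 1"
    and Tg: "\<And>x. x \<in> X \<Longrightarrow> T x = (c * g x) *\<^sub>R y"
    using rank_one_on_representation[OF X T] unfolding c_def by metis
  have bT: "op_bounded_on X T" using op_bounded_on_bdd_lin_on[OF T(1)] .
  have c: "c \<ge> 0" unfolding c_def using op_norm_on_nonneg[OF X bT] .
  have bJT: "op_bounded_on X (\<lambda>x. x + T x)"
    using op_bounded_on_add[OF op_bounded_on_bounded_linear[OF bounded_linear_ident] bT] .
  have "op_norm_on X (\<lambda>x. x + T x) \<le> 1 + c"
    unfolding c_def using op_norm_on_upper[OF bT]
    by (intro op_norm_on_least[OF X]) (auto simp: mem_unit_ball_on intro: norm_triangle_le add_mono)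
  moreover have "(1 + c * (1 - \<epsilon>)) * (1 - \<epsilon>) \<le> op_norm_on X (\<lambda>x. x + T x)"
    if \<epsilon>: "0 < \<epsilon>" "\<epsilon> < 1" for \<epsilon>
  proof -
    obtain x where x: "x \<in> unit_ball_on X" "g x > 1 - \<epsilon>" "norm (x + y) > 2 - \<epsilon>"
      using daugavet_slicesD[OF S _ y g] \<epsilon> by auto
    have "c * (1 - \<epsilon>) \<le> c * g x" using x(2) c by (intro mult_left_mono) auto
    then have "(1 + c * (1 - \<epsilon>)) * (1 - \<epsilon>) \<le> (1 + c * g x) * (1 - \<epsilon>)"
      using \<epsilon> by (intro mult_right_mono) auto
    also have "\<dots> \<le> norm (x + (c * g x) *\<^sub>R y)"
      using x \<epsilon> c y by (intro norm_add_scaleR_ge) (auto simp: mem_unit_ball_on)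
    also have "\<dots> \<le> op_norm_on X (\<lambda>x. x + T x)"
      using op_norm_on_upper[OF bJT x(1)] Tg x(1) by (simp add: mem_unit_ball_on)
    finally show ?thesis .
  qed
  then have "1 + c \<le> op_norm_on X (\<lambda>x. x + T x)"
    by (intro tendsto_upperbound[of "\<lambda>\<epsilon>. (1 + c * (1 - \<epsilon>)) * (1 - \<epsilon>)" _ "at_right 0"])
      (auto intro!: tendsto_eq_intros eventually_mono[OF eventually_at_right_real[of 0 1]])
  ultimately show "op_norm_on X (\<lambda>x. x + T x) = 1 + op_norm_on X T"
    unfolding c_def by linarith
qed

definition daugavet_dual_slices :: "'y::real_normed_vector set \<Rightarrow> bool" where
  "daugavet_dual_slices X \<longleftrightarrow> (\<forall>\<epsilon>>0. \<forall>y. norm y = 1 \<longrightarrow> (\<forall>xs\<in>dual_on X. op_norm_on X xs = 1 \<longrightarrow>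
     (\<exists>v\<in>dual_unit_ball. v y > 1 - \<epsilon> \<and> op_norm_on X (\<lambda>x. v x + xs x) > 2 - \<epsilon>)))"

lemma daugavet_dual_slicesD:
  "daugavet_dual_slices X \<Longrightarrow> \<epsilon> > 0 \<Longrightarrow> norm y = 1 \<Longrightarrow> xs \<in> dual_on X \<Longrightarrow> op_norm_on X xs = 1
    \<Longrightarrow> \<exists>v\<in>dual_unit_ball. v y > 1 - \<epsilon> \<and> op_norm_on X (\<lambda>x. v x + xs x) > 2 - \<epsilon>"
  unfolding daugavet_dual_slices_def by blast

lemma daugavet_slices_imp_dual_slices:
  fixes X :: "'a::real_normed_vector set"
  assumes S: "daugavet_slices X"
  shows "daugavet_dual_slices X"
  unfolding daugavet_dual_slices_def
proof (intro allI impI ballI)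
  fix \<epsilon> :: real and y :: 'a and xs
  assume \<epsilon>: "\<epsilon> > 0" and y: "norm y = 1" and xs: "xs \<in> dual_on X" "op_norm_on X xs = 1"
  obtain x where x: "x \<in> unit_ball_on X" "xs x > 1 - \<epsilon> / 2" "norm (x + y) > 2 - \<epsilon> / 2"
    using daugavet_slicesD[OF S _ y xs, of "\<epsilon> / 2"] \<epsilon> by auto
  obtain \<psi> where \<psi>: "bounded_linear \<psi>" "\<And>x. \<bar>\<psi> x\<bar> \<le> norm x" "\<psi> (x + y) = norm (x + y)"
    using exists_norming_functional[of "x + y"] by blast
  have "\<psi> x \<le> 1" "\<psi> y \<le> 1"
    using \<psi>(2)[of x] \<psi>(2)[of y] x(1) y by (auto simp: mem_unit_ball_on abs_le_iff)
  moreover have "\<psi> x + \<psi> y > 2 - \<epsilon> / 2"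
    using \<psi>(1,3) x(3) by (simp add: linear_add bounded_linear.linear)
  moreover have "\<psi> x + xs x \<le> op_norm_on X (\<lambda>x. \<psi> x + xs x)"
    using op_norm_on_upper[OF op_bounded_on_add[OF op_bounded_on_bounded_linear[OF \<psi>(1)]
          dual_on_op_bounded_on[OF xs(1)]] x(1)] by simp
  ultimately show "\<exists>v\<in>dual_unit_ball. v y > 1 - \<epsilon> \<and> op_norm_on X (\<lambda>x. v x + xs x) > 2 - \<epsilon>"
    using \<psi>(1,2) x(2) by (intro bexI[of _ \<psi>]) (auto simp: mem_dual_unit_ball)
qed

lemma daugavet_dual_slices_imp_slices:
  fixes X :: "'a::real_normed_vector set"
  assumes X: "subspace X" and S: "daugavet_dual_slices X"
  shows "daugavet_slices X"
  unfolding daugavet_slices_def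
proof (intro allI impI ballI)
  fix \<epsilon> :: real and y :: 'a and xs
  assume \<epsilon>: "\<epsilon> > 0" and y: "norm y = 1" and xs: "xs \<in> dual_on X" "op_norm_on X xs = 1"
  obtain v where v: "v \<in> dual_unit_ball" "v y > 1 - \<epsilon> / 2" "op_norm_on X (\<lambda>x. v x + xs x) > 2 - \<epsilon> / 2"
    using daugavet_dual_slicesD[OF S _ y xs, of "\<epsilon> / 2"] \<epsilon> by auto
  then have v': "bounded_linear v" "\<And>x. \<bar>v x\<bar> \<le> norm x" by (auto simp: mem_dual_unit_ball)
  obtain x where x: "x \<in> unit_ball_on X" "v x + xs x > 2 - \<epsilon> / 2"
    using dual_on_approx[OF X dual_on_add[OF dual_on_bounded_linear[OF v'(1)] xs(1)] v(3)] by blast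
  have "v x \<le> 1" "xs x \<le> 1"
    using v'(2)[of x] x(1) dual_on_abs_le[OF xs(1) x(1)] xs(2) by (auto simp: mem_unit_ball_on)
  moreover have "v x + v y \<le> norm (x + y)"
    using v'(2)[of "x + y"] v'(1) by (simp add: linear_add bounded_linear.linear)
  ultimately show "\<exists>x\<in>unit_ball_on X. xs x > 1 - \<epsilon> \<and> norm (x + y) > 2 - \<epsilon>"
    using x v(2) by (intro bexI[of _ x]) auto
qed

section \<open>Weak and weak-star neighbourhoods\<close>

lemma openin_generated_by_functionals_basic:
  assumes "i \<in> A" "open W"
  shows "openin (topology_generated_by {{x\<in>S. \<phi> i x \<in> W} | i W. i \<in> A \<and> open W})
           {x\<in>S. \<phi> i x \<in> W}"
  unfolding openin_topology_generated_by_iff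
  using assms by (intro generate_topology_on.Basis) blast

definition functional_nbhd :: "'a set \<Rightarrow> ('i \<Rightarrow> 'a \<Rightarrow> real) \<Rightarrow> 'i set \<Rightarrow> 'a \<Rightarrow> 'a set \<Rightarrow> bool" where
  "functional_nbhd S \<phi> A x0 U \<longleftrightarrow>
     (\<exists>I \<delta>. finite I \<and> I \<subseteq> A \<and> \<delta> > 0 \<and> {x\<in>S. \<forall>i\<in>I. \<bar>\<phi> i x - \<phi> i x0\<bar> < \<delta>} \<subseteq> U)"

lemma functional_nbhd_mono:
  "functional_nbhd S \<phi> A x0 U \<Longrightarrow> U \<subseteq> V \<Longrightarrow> functional_nbhd S \<phi> A x0 V"
  unfolding functional_nbhd_def by blast

lemma functional_nbhd_Int:
  assumes "functional_nbhd S \<phi> A x0 U" "functional_nbhd S \<phi> A x0 V"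
  shows "functional_nbhd S \<phi> A x0 (U \<inter> V)"
proof -
  obtain I \<delta> J \<eta> where "finite I" "I \<subseteq> A" "\<delta> > 0" "finite J" "J \<subseteq> A" "\<eta> > 0"
    and IU: "{x\<in>S. \<forall>i\<in>I. \<bar>\<phi> i x - \<phi> i x0\<bar> < \<delta>} \<subseteq> U"
    and JV: "{x\<in>S. \<forall>i\<in>J. \<bar>\<phi> i x - \<phi> i x0\<bar> < \<eta>} \<subseteq> V"
    using assms unfolding functional_nbhd_def by (elim exE conjE)
  moreover have "{x\<in>S. \<forall>i\<in>I \<union> J. \<bar>\<phi> i x - \<phi> i x0\<bar> < min \<delta> \<eta>} \<subseteq> U \<inter> V"
    using IU JV by fastforce
  ultimately show ?thesis
    unfolding functional_nbhd_def by (intro exI[of _ "I \<union> J"] exI[of _ "min \<delta> \<eta>"]) simp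
qed

lemma openin_generated_by_functionals_nbhd:
  fixes \<phi> :: "'i \<Rightarrow> 'a \<Rightarrow> real"
  assumes "openin (topology_generated_by {{x\<in>S. \<phi> i x \<in> W} | i W. i \<in> A \<and> open W}) U"
    and "x0 \<in> U"
  shows "functional_nbhd S \<phi> A x0 U"
proof -
  have "\<forall>x0\<in>U. functional_nbhd S \<phi> A x0 U"
    using assms(1) unfolding openin_topology_generated_by_iff
  proof (induction rule: generate_topology_on.induct)
    case Empty
    show ?case by blast
  next
    case (Int U V)
    then show ?case by (blast intro: functional_nbhd_Int)
  next
    case (UN K)
    then show ?case by (blast intro: functional_nbhd_mono)
  next
    case (Basis s)
    then obtain i W where s: "s = {x\<in>S. \<phi> i x \<in> W}" "i \<in> A" "open W" by blast
    show ?case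
    proof
      fix x0 assume "x0 \<in> s"
      then obtain e where "e > 0" "\<And>b. \<bar>b - \<phi> i x0\<bar> < e \<Longrightarrow> b \<in> W"
        using s unfolding open_dist dist_real_def by blast
      then show "functional_nbhd S \<phi> A x0 s"
        unfolding functional_nbhd_def s using s(2) by (intro exI[of _ "{i}"] exI[of _ e]) auto
    qed
  qed
  then show ?thesis using assms(2) by blast
qed

lemma weak_top_basic: "f \<in> dual_on X \<Longrightarrow> open W \<Longrightarrow> openin (weak_top X) {x\<in>X. f x \<in> W}"
  unfolding weak_top_def by (rule openin_generated_by_functionals_basic[where \<phi> = "\<lambda>f x. f x"])

lemma weak_top_nbhd:
  assumes "openin (weak_top X) U" "x0 \<in> U"
  shows "\<exists>I \<delta>. finite I \<and> I \<subseteq> dual_on X \<and> \<delta> > 0 \<and> {x\<in>X. \<forall>f\<in>I. \<bar>f x - f x0\<bar> < \<delta>} \<subseteq> U"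
  using openin_generated_by_functionals_nbhd[where \<phi> = "\<lambda>f x. f x", OF assms[unfolded weak_top_def]]
  unfolding functional_nbhd_def .

lemma weak_star_top_basic: "open W \<Longrightarrow> openin weak_star_top {v\<in>dual_space. v y \<in> W}"
  using openin_generated_by_functionals_basic[where \<phi> = "\<lambda>y v. v y" and A = UNIV and S = dual_space]
  unfolding weak_star_top_def by simp

lemma weak_star_top_nbhd:
  assumes "openin weak_star_top U" "v0 \<in> U"
  shows "\<exists>I \<delta>. finite I \<and> \<delta> > 0 \<and> {v\<in>dual_space. \<forall>y\<in>I. \<bar>v y - v0 y\<bar> < \<delta>} \<subseteq> U"
proof -
  have "functional_nbhd dual_space (\<lambda>y v. v y) UNIV v0 U"
    using assms unfolding weak_star_top_def
    by (intro openin_generated_by_functionals_nbhd) simp_all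
  then show ?thesis unfolding functional_nbhd_def by blast
qed

section \<open>A finite-dimensional Bourgain lemma\<close>

definition sqdist_on :: "'i set \<Rightarrow> ('i \<Rightarrow> real) \<Rightarrow> ('i \<Rightarrow> real) \<Rightarrow> real" where
  "sqdist_on I u v = (\<Sum>i\<in>I. (u i - v i)^2)"

lemma abs_less_of_sqdist_on:
  assumes "finite I" "i \<in> I" "sqdist_on I u v < \<rho>^2" "\<rho> \<ge> 0"
  shows "\<bar>u i - v i\<bar> < \<rho>"
proof -
  have "\<bar>u i - v i\<bar>^2 \<le> sqdist_on I u v"
    unfolding sqdist_on_def using assms(1,2) by (simp, intro member_le_sum) auto
  then show ?thesis
    using assms(3,4) power2_less_imp_less[of "\<bar>u i - v i\<bar>" \<rho>] by linarith
qed

lemma sqdist_on_le_card: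
  assumes "\<And>i. i \<in> I \<Longrightarrow> \<bar>u i - v i\<bar> \<le> B"
  shows "sqdist_on I u v \<le> real (card I) * B^2"
proof -
  have "(u i - v i)^2 \<le> B^2" if "i \<in> I" for i
    using assms[OF that] by (metis abs_ge_zero abs_le_square_iff abs_of_nonneg order_trans)
  then have "sqdist_on I u v \<le> (\<Sum>i\<in>I. B^2)"
    unfolding sqdist_on_def by (rule sum_mono)
  then show ?thesis by simp
qed

lemma sqdist_on_convex_step:
  "sqdist_on I u (\<lambda>i. (1 - \<tau>) * a i + \<tau> * q i)
     = sqdist_on I u a - \<tau> * (2 * (\<Sum>i\<in>I. (q i - a i) * (u i - a i))) + \<tau>^2 * sqdist_on I q a"
proof -
  have "sqdist_on I u (\<lambda>i. (1 - \<tau>) * a i + \<tau> * q i)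
      = (\<Sum>i\<in>I. (u i - a i)^2 - \<tau> * (2 * ((q i - a i) * (u i - a i))) + \<tau>^2 * (q i - a i)^2)"
    unfolding sqdist_on_def by (rule sum.cong) (simp_all add: power2_eq_square algebra_simps)
  then show ?thesis
    unfolding sqdist_on_def by (simp add: sum.distrib sum_subtractf sum_distrib_left)
qed

lemma convex_sum_abs_diff_le:
  fixes m :: nat and u v l :: "nat \<Rightarrow> real"
  assumes "\<forall>j<m. l j \<ge> 0" "(\<Sum>j<m. l j) = 1" "\<forall>j<m. \<bar>u j - v j\<bar> \<le> \<rho>"
  shows "\<bar>(\<Sum>j<m. l j * u j) - (\<Sum>j<m. l j * v j)\<bar> \<le> \<rho>"
proof -
  have "(\<Sum>j<m. l j *\<^sub>R (u j - v j)) \<in> {-\<rho>..\<rho>}"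
    using assms by (intro convex_sum) (auto simp: abs_le_iff)
  then show ?thesis by (simp add: abs_le_iff right_diff_distrib sum_subtractf)
qed

text \<open>The set \<open>K\<close> is seen in the Euclidean space \<open>\<real>\<^sup>I\<close> through the coordinates \<open>p k i\<close>;
  slices of \<open>K\<close> are cut out by the linear functionals \<open>k \<mapsto> \<Sum>i\<in>I. c i * p k i\<close>.\<close>
definition small_slice_centre :: "'i set \<Rightarrow> ('a \<Rightarrow> 'i \<Rightarrow> real) \<Rightarrow> 'a set \<Rightarrow> real \<Rightarrow> 'a \<Rightarrow> bool" where
  "small_slice_centre I p K \<rho> r \<longleftrightarrow> r \<in> K \<and> (\<exists>c t. (\<Sum>i\<in>I. c i * p r i) > t \<and>
     (\<forall>k\<in>K. (\<Sum>i\<in>I. c i * p k i) > t \<longrightarrow> sqdist_on I (p k) (p r) < \<rho>^2))"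

definition slice_combinations :: "'i set \<Rightarrow> ('a \<Rightarrow> 'i \<Rightarrow> real) \<Rightarrow> 'a set \<Rightarrow> real \<Rightarrow> ('i \<Rightarrow> real) set" where
  "slice_combinations I p K \<rho> = {(\<lambda>i. \<Sum>j<m. l j * p (r j) i) | (m :: nat) l r.
     (\<forall>j<m. l j \<ge> 0) \<and> (\<Sum>j<m. l j) = 1 \<and> (\<forall>j<m. small_slice_centre I p K \<rho> (r j))}"

lemma exists_far_small_slice_centre:
  fixes p :: "'a \<Rightarrow> 'i \<Rightarrow> real"
  assumes bnd: "\<forall>i\<in>I. \<forall>k\<in>K. \<bar>p k i\<bar> \<le> M" and "K \<noteq> {}" and "\<rho> > 0"
  shows "\<exists>r. small_slice_centre I p K \<rho> r \<and>
    (\<forall>k\<in>K. sqdist_on I (p k) cen < sqdist_on I (p r) cen + \<rho>^2 / 3)"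
proof -
  define \<alpha> where "\<alpha> = \<rho>^2 / 3"
  have "\<alpha> > 0" unfolding \<alpha>_def using \<open>\<rho> > 0\<close> by simp
  define F where "F k = sqdist_on I (p k) cen" for k
  have "F k \<le> (\<Sum>i\<in>I. (M + \<bar>cen i\<bar>)^2)" if k: "k \<in> K" for k
    unfolding F_def sqdist_on_def
  proof (rule sum_mono)
    fix i assume "i \<in> I"
    then have "\<bar>p k i\<bar> \<le> M" using bnd k by blast
    then have "\<bar>p k i - cen i\<bar> \<le> \<bar>M + \<bar>cen i\<bar>\<bar>"
      using abs_triangle_ineq4[of "p k i" "cen i"] by linarith
    then show "(p k i - cen i)^2 \<le> (M + \<bar>cen i\<bar>)^2"
      using abs_le_square_iff by blast
  qed
  then have bdd: "bdd_above (F ` K)" by (rule bdd_aboveI2)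
  obtain r where r: "r \<in> K" "F r > (SUP k\<in>K. F k) - \<alpha>"
    using less_cSUP_iff[OF \<open>K \<noteq> {}\<close> bdd, of "(SUP k\<in>K. F k) - \<alpha>"] \<open>\<alpha> > 0\<close> by auto
  have far: "F k < F r + \<alpha>" if "k \<in> K" for k
    using cSUP_upper[OF that bdd] r(2) by linarith
  define c where "c i = p r i - cen i" for i
  define t where "t = (\<Sum>i\<in>I. c i * p r i) - \<alpha>"
  have Fr: "F r = (\<Sum>i\<in>I. c i * p r i) - (\<Sum>i\<in>I. c i * cen i)"
    unfolding F_def sqdist_on_def c_def
    by (simp add: power2_eq_square algebra_simps flip: sum_subtractf)
  have "sqdist_on I (p k) (p r) < \<rho>^2" if k: "k \<in> K" "(\<Sum>i\<in>I. c i * p k i) > t" for k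
  proof -
    have "sqdist_on I (p k) (p r) = (\<Sum>i\<in>I. (p k i - cen i)^2 - 2 * (c i * p k i) + 2 * (c i * cen i) + c i^2)"
      unfolding sqdist_on_def c_def by (rule sum.cong) (simp_all add: power2_eq_square algebra_simps)
    also have "\<dots> = F k - 2 * (\<Sum>i\<in>I. c i * p k i) + 2 * (\<Sum>i\<in>I. c i * cen i) + F r"
      unfolding F_def sqdist_on_def c_def by (simp add: sum.distrib sum_subtractf sum_distrib_left)
    finally show ?thesis
      using far[OF k(1)] k(2) Fr unfolding t_def \<alpha>_def by linarith
  qed
  then have "small_slice_centre I p K \<rho> r"
    unfolding small_slice_centre_def using r(1) \<open>\<alpha> > 0\<close>
    by (intro conjI exI[of _ c] exI[of _ t]) (auto simp: t_def)
  then show ?thesis using far unfolding F_def \<alpha>_def by blast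
qed

lemma small_slice_centre_in_slice_combinations:
  "small_slice_centre I p K \<rho> r \<Longrightarrow> p r \<in> slice_combinations I p K \<rho>"
  unfolding slice_combinations_def
  by (intro CollectI exI[of _ "1::nat"] exI[of _ "\<lambda>_. 1"] exI[of _ "\<lambda>_. r"]) auto

lemma slice_combinations_bounded:
  assumes "a \<in> slice_combinations I p K \<rho>" "\<forall>i\<in>I. \<forall>k\<in>K. \<bar>p k i\<bar> \<le> M" "i \<in> I"
  shows "\<bar>a i\<bar> \<le> M"
proof -
  obtain m :: nat and l r where a: "a = (\<lambda>i. \<Sum>j<m. l j * p (r j) i)" and l: "\<forall>j<m. l j \<ge> 0" "(\<Sum>j<m. l j) = 1"
    and r: "\<forall>j<m. small_slice_centre I p K \<rho> (r j)"
    using assms(1) unfolding slice_combinations_def by blast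
  have "p (r j) i \<in> {-M..M}" if "j < m" for j
    using r that assms(2,3) unfolding small_slice_centre_def by (force simp: abs_le_iff)
  then have "(\<Sum>j<m. l j *\<^sub>R p (r j) i) \<in> {-M..M}"
    using l by (intro convex_sum) auto
  then show ?thesis using a by (simp add: abs_le_iff)
qed

lemma slice_combinations_sqdist_le:
  assumes "a \<in> slice_combinations I p K \<rho>" "\<forall>i\<in>I. \<forall>k\<in>K. \<bar>p k i\<bar> \<le> M" "k \<in> K"
  shows "sqdist_on I (p k) a \<le> real (card I) * (2 * M)^2"
proof (rule sqdist_on_le_card)
  fix i assume "i \<in> I"
  then have "\<bar>p k i\<bar> \<le> M" "\<bar>a i\<bar> \<le> M"
    using assms slice_combinations_bounded[OF assms(1,2)] by auto
  then show "\<bar>p k i - a i\<bar> \<le> 2 * M" by (simp add: abs_le_iff)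
qed

lemma slice_combinations_extend:
  assumes "a \<in> slice_combinations I p K \<rho>" "small_slice_centre I p K \<rho> r" "0 \<le> \<tau>" "\<tau> \<le> 1"
  shows "(\<lambda>i. (1 - \<tau>) * a i + \<tau> * p r i) \<in> slice_combinations I p K \<rho>"
proof -
  obtain m :: nat and l rs where a: "a = (\<lambda>i. \<Sum>j<m. l j * p (rs j) i)" and l: "\<forall>j<m. l j \<ge> 0" "(\<Sum>j<m. l j) = 1"
    and rs: "\<forall>j<m. small_slice_centre I p K \<rho> (rs j)"
    using assms(1) unfolding slice_combinations_def by blast
  define l' where "l' j = (if j < m then (1 - \<tau>) * l j else \<tau>)" for j
  define rs' where "rs' = rs(m := r)"
  have "(\<lambda>i. (1 - \<tau>) * a i + \<tau> * p r i) = (\<lambda>i. \<Sum>j<Suc m. l' j * p (rs' j) i)"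
    unfolding a l'_def rs'_def by (simp add: sum.lessThan_Suc sum_distrib_left mult.assoc)
  moreover have "(\<Sum>j<Suc m. l' j) = 1"
    using l(2) unfolding l'_def by (simp add: sum.lessThan_Suc flip: sum_distrib_left)
  moreover have "\<forall>j<Suc m. l' j \<ge> 0" "\<forall>j<Suc m. small_slice_centre I p K \<rho> (rs' j)"
    using l(1) rs assms(2-4) unfolding l'_def rs'_def by (auto simp: less_Suc_eq)
  ultimately show ?thesis unfolding slice_combinations_def by blast
qed

text \<open>The centre is placed far behind \<open>a\<close>, opposite to \<open>p x0\<close>; a point almost farthest
  from it must then lie well ahead of \<open>a\<close> in the direction of \<open>p x0 - a\<close>.\<close>
lemma exists_correlated_small_slice_centre:
  fixes p :: "'a \<Rightarrow> 'i \<Rightarrow> real"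
  assumes bnd: "\<forall>i\<in>I. \<forall>k\<in>K. \<bar>p k i\<bar> \<le> M" and "\<rho> > 0" and x0: "x0 \<in> K"
    and D: "\<forall>k\<in>K. sqdist_on I (p k) a \<le> D" and E: "sqdist_on I (p x0) a > 0"
  shows "\<exists>r. small_slice_centre I p K \<rho> r \<and>
    sqdist_on I (p x0) a < 2 * (\<Sum>i\<in>I. (p r i - a i) * (p x0 i - a i))"
proof -
  define e where "e i = p x0 i - a i" for i
  define E where "E = sqdist_on I (p x0) a"
  define \<alpha> where "\<alpha> = \<rho>^2 / 3"
  define R where "R = (\<alpha> + D) / E"
  define cen where "cen i = a i - R * e i" for i
  obtain r where r: "small_slice_centre I p K \<rho> r"
    and far: "sqdist_on I (p x0) cen < sqdist_on I (p r) cen + \<alpha>"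
    using exists_far_small_slice_centre[OF bnd _ \<open>\<rho> > 0\<close>, of cen] x0 unfolding \<alpha>_def by blast
  define d where "d i = p r i - a i" for i
  define S where "S = sqdist_on I (p r) a"
  define P where "P = (\<Sum>i\<in>I. d i * e i)"
  have "S \<le> D" using D r unfolding S_def small_slice_centre_def by blast
  have "E > 0" "\<alpha> > 0" using E \<open>\<rho> > 0\<close> by (simp_all add: E_def \<alpha>_def)
  have "0 \<le> S" unfolding S_def sqdist_on_def by (simp add: sum_nonneg)
  then have RE: "R * E = \<alpha> + D" "R > 0"
    using \<open>E > 0\<close> \<open>\<alpha> > 0\<close> \<open>S \<le> D\<close> by (simp_all add: R_def)
  have "sqdist_on I (p x0) cen = (\<Sum>i\<in>I. (1 + R)^2 * (e i)^2)"
    unfolding sqdist_on_def cen_def e_def by (rule sum.cong) (simp_all add: power2_eq_square algebra_simps)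
  also have "\<dots> = (1 + R)^2 * E"
    by (simp add: E_def sqdist_on_def e_def sum_distrib_left)
  also have "\<dots> = E + 2 * (R * E) + R * (R * E)"
    by (simp add: power2_eq_square algebra_simps)
  finally have x0_cen: "sqdist_on I (p x0) cen = E + 2 * (R * E) + R * (R * E)" .
  have "sqdist_on I (p r) cen = (\<Sum>i\<in>I. (d i)^2 + 2 * R * (d i * e i) + R^2 * (e i)^2)"
    unfolding sqdist_on_def cen_def d_def by (rule sum.cong) (simp_all add: power2_eq_square algebra_simps)
  also have "\<dots> = S + 2 * (R * P) + R * (R * E)"
    by (simp add: S_def P_def E_def sqdist_on_def d_def e_def sum.distrib power2_eq_square
        mult.assoc flip: sum_distrib_left)
  finally have "sqdist_on I (p r) cen = S + 2 * (R * P) + R * (R * E)" .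
  with far x0_cen have "R * E < R * (2 * P)"
    using RE(1) \<open>S \<le> D\<close> \<open>E > 0\<close> by linarith
  then have "E < 2 * P" using RE(2) by simp
  then show ?thesis
    using r unfolding E_def P_def d_def e_def by blast
qed

lemma greedy_descent:
  fixes p :: "'a \<Rightarrow> 'i \<Rightarrow> real"
  assumes bnd: "\<forall>i\<in>I. \<forall>k\<in>K. \<bar>p k i\<bar> \<le> M" and "\<rho> > 0" and x0: "x0 \<in> K"
    and a: "a \<in> slice_combinations I p K \<rho>" and far: "\<rho>^2 \<le> sqdist_on I (p x0) a"
  shows "\<exists>a'\<in>slice_combinations I p K \<rho>.
    sqdist_on I (p x0) a' \<le> sqdist_on I (p x0) a - \<rho>^4 / (4 * (real (card I) * (2 * M)^2 + 1))"
proof -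
  define D where "D = real (card I) * (2 * M)^2 + 1"
  have D: "sqdist_on I (p k) a \<le> D" if "k \<in> K" for k
    using slice_combinations_sqdist_le[OF a bnd that] unfolding D_def by linarith
  define E where "E = sqdist_on I (p x0) a"
  have "0 < \<rho>^2" using \<open>\<rho> > 0\<close> by simp
  then have "0 < E" "E \<le> D" using far D[OF x0] unfolding E_def by linarith+
  obtain r where r: "small_slice_centre I p K \<rho> r"
    and corr: "E < 2 * (\<Sum>i\<in>I. (p r i - a i) * (p x0 i - a i))"
    using exists_correlated_small_slice_centre[OF bnd \<open>\<rho> > 0\<close> x0] D \<open>0 < E\<close> unfolding E_def by blast
  define P where "P = (\<Sum>i\<in>I. (p r i - a i) * (p x0 i - a i))"
  define S where "S = sqdist_on I (p r) a"
  have "S \<le> D" using D r unfolding S_def small_slice_centre_def by blast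
  define \<tau> where "\<tau> = E / (2 * D)"
  have \<tau>: "0 < \<tau>" "\<tau> \<le> 1" using \<open>0 < E\<close> \<open>E \<le> D\<close> unfolding \<tau>_def by auto
  define a' where "a' = (\<lambda>i. (1 - \<tau>) * a i + \<tau> * p r i)"
  have a': "a' \<in> slice_combinations I p K \<rho>"
    unfolding a'_def using \<tau> by (intro slice_combinations_extend[OF a r]) auto
  have "sqdist_on I (p x0) a' = E - \<tau> * (2 * P) + \<tau>^2 * S"
    unfolding a'_def E_def P_def S_def by (rule sqdist_on_convex_step)
  moreover have "E - \<tau> * (2 * P) + \<tau>^2 * S \<le> E - \<tau> * E + \<tau>^2 * D"
  proof -
    have "\<tau> * E \<le> \<tau> * (2 * P)" using corr \<tau> unfolding P_def by (intro mult_left_mono) auto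
    moreover have "\<tau>^2 * S \<le> \<tau>^2 * D" using \<open>S \<le> D\<close> by (intro mult_left_mono) auto
    ultimately show ?thesis by linarith
  qed
  moreover have "E - \<tau> * E + \<tau>^2 * D = E - E^2 / (4 * D)"
    using \<open>0 < E\<close> \<open>E \<le> D\<close> unfolding \<tau>_def by (simp add: field_simps power2_eq_square)
  moreover have "\<rho>^4 \<le> E^2"
    using power_mono[OF far, of 2] \<open>0 < \<rho>^2\<close> unfolding E_def by (simp add: power_mult[symmetric])
  then have "\<rho>^4 / (4 * D) \<le> E^2 / (4 * D)"
    using \<open>0 < E\<close> \<open>E \<le> D\<close> by (intro divide_right_mono) auto
  ultimately have "sqdist_on I (p x0) a' \<le> E - \<rho>^4 / (4 * D)" by linarith
  then show ?thesis using a' unfolding E_def D_def by blast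
qed

lemma greedy_converges:
  fixes p :: "'a \<Rightarrow> 'i \<Rightarrow> real"
  assumes bnd: "\<forall>i\<in>I. \<forall>k\<in>K. \<bar>p k i\<bar> \<le> M" and "\<rho> > 0" and x0: "x0 \<in> K"
  shows "\<exists>a\<in>slice_combinations I p K \<rho>. sqdist_on I (p x0) a < \<rho>^2"
proof (rule ccontr)
  assume "\<not> ?thesis"
  then have far: "\<rho>^2 \<le> sqdist_on I (p x0) a" if "a \<in> slice_combinations I p K \<rho>" for a
    using that by fastforce
  obtain r0 where "small_slice_centre I p K \<rho> r0"
    using exists_far_small_slice_centre[OF bnd _ \<open>\<rho> > 0\<close>] x0 by blast
  then have a0: "p r0 \<in> slice_combinations I p K \<rho>"
    by (rule small_slice_centre_in_slice_combinations)
  define \<gamma> where "\<gamma> = \<rho>^4 / (4 * (real (card I) * (2 * M)^2 + 1))"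
  have "0 < 4 * (real (card I) * (2 * M)^2 + 1)"
    by (intro mult_pos_pos add_nonneg_pos mult_nonneg_nonneg) auto
  then have "\<gamma> > 0" unfolding \<gamma>_def using \<open>\<rho> > 0\<close> by (intro divide_pos_pos zero_less_power)
  have "\<exists>a\<in>slice_combinations I p K \<rho>. sqdist_on I (p x0) a \<le> sqdist_on I (p x0) (p r0) - n * \<gamma>"
    for n :: nat
  proof (induction n)
    case 0
    then show ?case using a0 by auto
  next
    case (Suc n)
    then obtain a where a: "a \<in> slice_combinations I p K \<rho>"
      "sqdist_on I (p x0) a \<le> sqdist_on I (p x0) (p r0) - n * \<gamma>" by blast
    then obtain a' where "a' \<in> slice_combinations I p K \<rho>"
      "sqdist_on I (p x0) a' \<le> sqdist_on I (p x0) a - \<gamma>"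
      using greedy_descent[OF bnd \<open>\<rho> > 0\<close> x0 a(1) far[OF a(1)]] unfolding \<gamma>_def by blast
    with a(2) show ?case by (intro bexI[of _ a']) (auto simp: algebra_simps)
  qed
  moreover obtain n :: nat where "sqdist_on I (p x0) (p r0) / \<gamma> < n"
    using reals_Archimedean2 by blast
  then have "sqdist_on I (p x0) (p r0) < n * \<gamma>"
    using \<open>\<gamma> > 0\<close> by (simp add: pos_divide_less_eq)
  ultimately obtain a where "sqdist_on I (p x0) a < 0"
    by (metis diff_less_0_iff_less order_le_less_trans)
  then show False unfolding sqdist_on_def by (simp add: sum_nonneg leD)
qed

text \<open>Proved by a greedy descent: each step moves a convex
  combination of small-slice centres towards \<open>p x0\<close> and lowers the squared distance by a fixed
  amount as long as it exceeds \<open>\<rho>\<^sup>2\<close>.\<close>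
lemma approximation_by_small_slices:
  fixes p :: "'a \<Rightarrow> 'i \<Rightarrow> real"
  assumes fin: "finite I" and bnd: "\<forall>i\<in>I. \<forall>k\<in>K. \<bar>p k i\<bar> \<le> M" and x0: "x0 \<in> K" and "\<delta> > 0"
  obtains m :: nat and l c t where "\<forall>j<m. l j \<ge> 0" "(\<Sum>j<m. l j) = 1"
    "\<forall>j<m. \<exists>k\<in>K. (\<Sum>i\<in>I. c j i * p k i) > t j"
    "\<forall>\<kappa>. (\<forall>j<m. \<kappa> j \<in> K \<and> (\<Sum>i\<in>I. c j i * p (\<kappa> j) i) > t j) \<longrightarrow>
       (\<forall>i\<in>I. \<bar>(\<Sum>j<m. l j * p (\<kappa> j) i) - p x0 i\<bar> < \<delta>)"
proof -
  have "\<delta> / 2 > 0" using \<open>\<delta> > 0\<close> by simp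
  obtain a where "a \<in> slice_combinations I p K (\<delta> / 2)" and a_close: "sqdist_on I (p x0) a < (\<delta> / 2)^2"
    using greedy_converges[OF bnd \<open>\<delta> / 2 > 0\<close> x0] by blast
  then obtain m :: nat and l r where a: "a = (\<lambda>i. \<Sum>j<m. l j * p (r j) i)"
    and l: "\<forall>j<m. l j \<ge> 0" "(\<Sum>j<m. l j) = 1" and r: "\<forall>j<m. small_slice_centre I p K (\<delta> / 2) (r j)"
    unfolding slice_combinations_def by blast
  have "\<forall>j. \<exists>c t. j < m \<longrightarrow> r j \<in> K \<and> (\<Sum>i\<in>I. c i * p (r j) i) > t \<and>
      (\<forall>k\<in>K. (\<Sum>i\<in>I. c i * p k i) > t \<longrightarrow> sqdist_on I (p k) (p (r j)) < (\<delta> / 2)^2)"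
    using r unfolding small_slice_centre_def by blast
  then obtain c t where ct: "\<And>j. j < m \<Longrightarrow> r j \<in> K \<and> (\<Sum>i\<in>I. c j i * p (r j) i) > t j \<and>
      (\<forall>k\<in>K. (\<Sum>i\<in>I. c j i * p k i) > t j \<longrightarrow> sqdist_on I (p k) (p (r j)) < (\<delta> / 2)^2)"
    by metis
  show ?thesis
  proof (rule that[OF l])
    show "\<forall>j<m. \<exists>k\<in>K. (\<Sum>i\<in>I. c j i * p k i) > t j" using ct by blast
  next
    show "\<forall>\<kappa>. (\<forall>j<m. \<kappa> j \<in> K \<and> (\<Sum>i\<in>I. c j i * p (\<kappa> j) i) > t j) \<longrightarrow>
       (\<forall>i\<in>I. \<bar>(\<Sum>j<m. l j * p (\<kappa> j) i) - p x0 i\<bar> < \<delta>)"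
    proof (intro allI impI ballI)
      fix \<kappa> assume \<kappa>: "\<forall>j<m. \<kappa> j \<in> K \<and> (\<Sum>i\<in>I. c j i * p (\<kappa> j) i) > t j"
      fix i assume i: "i \<in> I"
      have "\<forall>j<m. \<bar>p (\<kappa> j) i - p (r j) i\<bar> \<le> \<delta> / 2"
        using abs_less_of_sqdist_on[OF fin i, of "p (\<kappa> _)" "p (r _)" "\<delta> / 2"] ct \<kappa> \<open>\<delta> > 0\<close>
        by (fastforce simp: less_imp_le)
      then have "\<bar>(\<Sum>j<m. l j * p (\<kappa> j) i) - a i\<bar> \<le> \<delta> / 2"
        unfolding a by (rule convex_sum_abs_diff_le[OF l])
      moreover have "\<bar>p x0 i - a i\<bar> < \<delta> / 2"
        using abs_less_of_sqdist_on[OF fin i a_close] \<open>\<delta> > 0\<close> by simp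
      ultimately show "\<bar>(\<Sum>j<m. l j * p (\<kappa> j) i) - p x0 i\<bar> < \<delta>"
        unfolding abs_less_iff abs_le_iff by linarith
    qed
  qed
qed

section \<open>Weakly open subsets of the unit ball\<close>

lemma sum_le_one_near_max:
  fixes s :: "nat \<Rightarrow> real" and m :: nat and s0 \<eta> :: real
  assumes "s0 \<le> 1" "\<forall>j<m. s j \<le> 1" "1 + real m - \<eta> \<le> s0 + (\<Sum>j<m. s j)"
  shows "1 - \<eta> \<le> s0" "\<forall>j<m. 1 - \<eta> \<le> s j"
proof -
  have gap: "(1 - s0) + (\<Sum>j<m. 1 - s j) \<le> \<eta>"
    using assms(3) by (simp add: sum_subtractf)
  have "0 \<le> (\<Sum>j<m. 1 - s j)" using assms(2) by (intro sum_nonneg) auto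
  then show "1 - \<eta> \<le> s0" using gap by linarith
  show "\<forall>j<m. 1 - \<eta> \<le> s j"
  proof (intro allI impI)
    fix j assume "j < m"
    then have "1 - s j \<le> (\<Sum>j<m. 1 - s j)" using assms(2) by (intro member_le_sum) auto
    then show "1 - \<eta> \<le> s j" using gap assms(1) by linarith
  qed
qed

lemma normalized_slice:
  assumes X: "subspace X" "X \<noteq> {0}" and g: "g \<in> dual_on X"
    and u0: "u0 \<in> unit_ball_on X" "g u0 > t"
  obtains xs \<eta> where "xs \<in> dual_on X" "op_norm_on X xs = 1" "\<eta> > 0"
    "\<And>u. u \<in> unit_ball_on X \<Longrightarrow> xs u > 1 - \<eta> \<Longrightarrow> g u > t"
proof (cases "op_norm_on X g > 0")
  case True
  define n where "n = op_norm_on X g"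
  have "n > 0" "t < n" using True dual_on_abs_le[OF g u0(1)] u0(2) unfolding n_def by auto
  show ?thesis
  proof (rule that)
    show "(\<lambda>x. g x / n) \<in> dual_on X" "op_norm_on X (\<lambda>x. g x / n) = 1"
      using dual_on_normalize[OF X(1) g True] unfolding n_def by blast+
    show "1 - t / n > 0" using \<open>n > 0\<close> \<open>t < n\<close> by (simp add: field_simps)
  next
    fix u assume "g u / n > 1 - (1 - t / n)"
    then show "g u > t" using \<open>n > 0\<close> by (simp add: field_simps)
  qed
next
  case False
  then have "g u = 0" if "u \<in> unit_ball_on X" for u
    using dual_on_abs_le[OF g that] by simp
  then have "t < 0" using u0 by force
  obtain xs where "xs \<in> dual_on X" "op_norm_on X xs = 1"
    using exists_unit_functional_on[OF X] by blast
  then show ?thesis using that[of xs 1] \<open>t < 0\<close> \<open>\<And>u. u \<in> unit_ball_on X \<Longrightarrow> g u = 0\<close> by force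
qed

lemma norming_functional_of_sum:
  fixes y :: "'a::real_normed_vector" and \<kappa> :: "nat \<Rightarrow> 'a" and m :: nat and \<eta> :: real
  assumes "norm y \<le> 1" "\<forall>j<m. norm (\<kappa> j) \<le> 1" "1 + real m - \<eta> \<le> norm (y + (\<Sum>j<m. \<kappa> j))"
  obtains \<psi> where "bounded_linear \<psi>" "\<And>x. \<bar>\<psi> x\<bar> \<le> norm x" "1 - \<eta> \<le> \<psi> y" "\<forall>j<m. 1 - \<eta> \<le> \<psi> (\<kappa> j)"
proof -
  obtain \<psi> where \<psi>: "bounded_linear \<psi>" "\<And>x. \<bar>\<psi> x\<bar> \<le> norm x"
    "\<psi> (y + (\<Sum>j<m. \<kappa> j)) = norm (y + (\<Sum>j<m. \<kappa> j))"
    using exists_norming_functional by blast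
  have "\<psi> y \<le> 1" using \<psi>(2)[of y] assms(1) by (simp add: abs_le_iff)
  moreover have "\<forall>j<m. \<psi> (\<kappa> j) \<le> 1"
    using \<psi>(2) assms(2) by (meson abs_le_D1 order_trans)
  moreover have "\<psi> (y + (\<Sum>j<m. \<kappa> j)) = \<psi> y + (\<Sum>j<m. \<psi> (\<kappa> j))"
    using \<psi>(1) by (simp add: linear_add linear_sum bounded_linear.linear)
  ultimately have "1 - \<eta> \<le> \<psi> y" "\<forall>j<m. 1 - \<eta> \<le> \<psi> (\<kappa> j)"
    using sum_le_one_near_max[of "\<psi> y" m "\<lambda>j. \<psi> (\<kappa> j)" \<eta>] assms(3) \<psi>(3) by auto
  then show ?thesis using that \<psi>(1,2) by blast
qed

lemma daugavet_slices_step: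
  fixes X :: "'a::real_normed_vector set"
  assumes X: "subspace X" "X \<noteq> {0}" and S: "daugavet_slices X" and "z \<noteq> 0"
    and g: "g \<in> dual_on X" and u0: "u0 \<in> unit_ball_on X" "g u0 > t" and "\<epsilon> > 0"
  shows "\<exists>u\<in>unit_ball_on X. g u > t \<and> norm (z + u) \<ge> norm z + 1 - \<epsilon>"
proof -
  obtain xs \<eta> where xs: "xs \<in> dual_on X" "op_norm_on X xs = 1" "\<eta> > 0"
    and slice: "\<And>u. u \<in> unit_ball_on X \<Longrightarrow> xs u > 1 - \<eta> \<Longrightarrow> g u > t"
    using normalized_slice[OF X g u0] by blast
  define y where "y = (1 / norm z) *\<^sub>R z"
  define e where "e = min \<eta> (\<epsilon> / (1 + norm z))"
  have "norm y = 1" "norm z *\<^sub>R y = z" using \<open>z \<noteq> 0\<close> unfolding y_def by simp_all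
  have "e > 0" "e \<le> \<eta>" using \<open>\<eta> > 0\<close> \<open>\<epsilon> > 0\<close> unfolding e_def by (simp_all add: add_pos_nonneg)
  obtain u where u: "u \<in> unit_ball_on X" "xs u > 1 - e" "norm (u + y) > 2 - e"
    using daugavet_slicesD[OF S \<open>e > 0\<close> \<open>norm y = 1\<close> xs(1,2)] by blast
  have "(1 + norm z) * (1 - e) \<le> norm (u + norm z *\<^sub>R y)"
    using u \<open>norm y = 1\<close> by (intro norm_add_scaleR_ge) (auto simp: mem_unit_ball_on)
  moreover have "(1 + norm z) * e \<le> \<epsilon>"
  proof -
    have "e \<le> \<epsilon> / (1 + norm z)" unfolding e_def by simp
    then show ?thesis by (simp add: pos_le_divide_eq add_pos_nonneg mult.commute)
  qed
  ultimately have "norm z + 1 - \<epsilon> \<le> norm (z + u)"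
    using \<open>norm z *\<^sub>R y = z\<close> by (simp add: algebra_simps)
  moreover have "g u > t" using slice u \<open>e \<le> \<eta>\<close> by force
  ultimately show ?thesis using u(1) by blast
qed

lemma daugavet_slices_sum:
  fixes X :: "'a::real_normed_vector set" and m :: nat and \<eta> :: real
  assumes X: "subspace X" "X \<noteq> {0}" and S: "daugavet_slices X" and y: "norm y = 1"
  shows "\<forall>j<m. g j \<in> dual_on X \<and> (\<exists>u\<in>unit_ball_on X. g j u > t j) \<Longrightarrow> 0 < \<eta> \<Longrightarrow> \<eta> \<le> 1 \<Longrightarrow>
    \<exists>\<kappa>. (\<forall>j<m. \<kappa> j \<in> unit_ball_on X \<and> g j (\<kappa> j) > t j) \<and> norm (y + (\<Sum>j<m. \<kappa> j)) \<ge> 1 + real m - \<eta>"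
proof (induction m arbitrary: \<eta>)
  case 0
  then show ?case using y by simp
next
  case (Suc m)
  obtain \<kappa> where \<kappa>: "\<forall>j<m. \<kappa> j \<in> unit_ball_on X \<and> g j (\<kappa> j) > t j"
    and big: "norm (y + (\<Sum>j<m. \<kappa> j)) \<ge> 1 + real m - \<eta> / 2"
    using Suc.IH[of "\<eta> / 2"] Suc.prems by auto
  have "y + (\<Sum>j<m. \<kappa> j) \<noteq> 0" using big Suc.prems(3) by auto
  moreover obtain u0 where "g m \<in> dual_on X" "u0 \<in> unit_ball_on X" "g m u0 > t m"
    using Suc.prems(1) by blast
  ultimately obtain u where u: "u \<in> unit_ball_on X" "g m u > t m"
    "norm (y + (\<Sum>j<m. \<kappa> j) + u) \<ge> norm (y + (\<Sum>j<m. \<kappa> j)) + 1 - \<eta> / 2"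
    using daugavet_slices_step[OF X S] Suc.prems(2) by (metis half_gt_zero)
  have "(\<Sum>j<Suc m. (\<kappa>(m := u)) j) = (\<Sum>j<m. \<kappa> j) + u" by simp
  then show ?case
    using \<kappa> u big by (intro exI[of _ "\<kappa>(m := u)"]) (auto simp: less_Suc_eq add.assoc)
qed

lemma weak_open_contains_slice_combinations:
  assumes X: "subspace X" and U: "openin (weak_top X) U" and x0: "x0 \<in> U" "x0 \<in> unit_ball_on X"
  obtains m :: nat and l g t where "\<forall>j<m. l j \<ge> 0" "(\<Sum>j<m. l j) = 1"
    "\<forall>j<m. g j \<in> dual_on X \<and> (\<exists>u\<in>unit_ball_on X. g j u > t j)"
    "\<forall>\<kappa>. (\<forall>j<m. \<kappa> j \<in> unit_ball_on X \<and> g j (\<kappa> j) > t j) \<longrightarrow> (\<Sum>j<m. l j *\<^sub>R \<kappa> j) \<in> U"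
proof -
  obtain I \<delta> where I: "finite I" "I \<subseteq> dual_on X" "\<delta> > 0"
    and IU: "{x\<in>X. \<forall>f\<in>I. \<bar>f x - f x0\<bar> < \<delta>} \<subseteq> U"
    using weak_top_nbhd[OF U x0(1)] by blast
  define M where "M = (\<Sum>f\<in>I. op_norm_on X f)"
  have "\<bar>f x\<bar> \<le> M" if "f \<in> I" "x \<in> unit_ball_on X" for f x
  proof -
    have "\<bar>f x\<bar> \<le> op_norm_on X f" using dual_on_abs_le that I(2) by blast
    also have "\<dots> \<le> M" unfolding M_def using I that
      by (intro member_le_sum) (auto intro: op_norm_on_nonneg[OF X dual_on_op_bounded_on])
    finally show ?thesis .
  qed
  then have bnd: "\<forall>f\<in>I. \<forall>x\<in>unit_ball_on X. \<bar>f x\<bar> \<le> M" by blast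
  obtain m :: nat and l c t where l: "\<forall>j<m. l j \<ge> 0" "(\<Sum>j<m. l j) = 1"
    and sl: "\<forall>j<m. \<exists>x\<in>unit_ball_on X. (\<Sum>f\<in>I. c j f * f x) > t j"
    and close: "\<forall>\<kappa>. (\<forall>j<m. \<kappa> j \<in> unit_ball_on X \<and> (\<Sum>f\<in>I. c j f * f (\<kappa> j)) > t j) \<longrightarrow>
       (\<forall>f\<in>I. \<bar>(\<Sum>j<m. l j * f (\<kappa> j)) - f x0\<bar> < \<delta>)"
    by (rule approximation_by_small_slices[where p = "\<lambda>x f. f x", OF I(1) bnd x0(2) I(3)])
  define g where "g j = (\<lambda>x. \<Sum>f\<in>I. c j f * f x)" for j
  show ?thesis
  proof (rule that[OF l])
    show "\<forall>j<m. g j \<in> dual_on X \<and> (\<exists>u\<in>unit_ball_on X. g j u > t j)"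
      using sl I unfolding g_def by (auto intro!: dual_on_sum dual_on_cmult)
  next
    show "\<forall>\<kappa>. (\<forall>j<m. \<kappa> j \<in> unit_ball_on X \<and> g j (\<kappa> j) > t j) \<longrightarrow> (\<Sum>j<m. l j *\<^sub>R \<kappa> j) \<in> U"
    proof (intro allI impI)
    fix \<kappa> assume \<kappa>: "\<forall>j<m. \<kappa> j \<in> unit_ball_on X \<and> g j (\<kappa> j) > t j"
    have "(\<Sum>j<m. l j *\<^sub>R \<kappa> j) \<in> X"
      using \<kappa> X by (auto simp: mem_unit_ball_on intro: subspace_sum subspace_scale)
    moreover have "\<bar>f (\<Sum>j<m. l j *\<^sub>R \<kappa> j) - f x0\<bar> < \<delta>" if "f \<in> I" for f
    proof -
      have "lin_on X f" using that I(2) by (auto simp: dual_on_def bdd_lin_on_def)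
      moreover have "\<kappa> j \<in> X" if "j \<in> {..<m}" for j using \<kappa> that by (simp add: mem_unit_ball_on)
      ultimately have "f (\<Sum>j<m. l j *\<^sub>R \<kappa> j) = (\<Sum>j<m. l j *\<^sub>R f (\<kappa> j))"
        by (rule lin_on_sum_scaleR[OF X _ finite_lessThan])
      then have "f (\<Sum>j<m. l j *\<^sub>R \<kappa> j) = (\<Sum>j<m. l j * f (\<kappa> j))" by simp
      then show ?thesis using close \<kappa> that unfolding g_def by auto
    qed
    ultimately show "(\<Sum>j<m. l j *\<^sub>R \<kappa> j) \<in> U" using IU by blast
    qed
  qed
qed

definition daugavet_weak_open :: "'y::real_normed_vector set \<Rightarrow> bool" where
  "daugavet_weak_open X \<longleftrightarrow> (\<forall>\<epsilon>>0. \<forall>y. norm y = 1 \<longrightarrow>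
     (\<forall>U. openin (weak_top X) U \<and> U \<inter> unit_ball_on X \<noteq> {} \<longrightarrow>
       (\<exists>V. openin (weak_top X) V \<and> V \<inter> unit_ball_on X \<noteq> {} \<and>
            V \<inter> unit_ball_on X \<subseteq> U \<inter> unit_ball_on X \<and>
            (\<forall>v\<in>V \<inter> unit_ball_on X. norm (v + y) > 2 - \<epsilon>))))"

lemma daugavet_slices_imp_weak_open:
  fixes X :: "'a::real_normed_vector set"
  assumes X: "subspace X" "X \<noteq> {0}" and S: "daugavet_slices X"
  shows "daugavet_weak_open X"
  unfolding daugavet_weak_open_def
proof (intro allI impI, elim conjE)
  fix \<epsilon> :: real and y :: 'a and U
  assume "\<epsilon> > 0" and y: "norm y = 1" and U: "openin (weak_top X) U" "U \<inter> unit_ball_on X \<noteq> {}"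
  then obtain x0 where x0: "x0 \<in> U" "x0 \<in> unit_ball_on X" by blast
  obtain m :: nat and l g t where l: "\<forall>j<m. l j \<ge> 0" "(\<Sum>j<m. l j) = 1"
    and sl: "\<forall>j<m. g j \<in> dual_on X \<and> (\<exists>u\<in>unit_ball_on X. g j u > t j)"
    and comb: "\<forall>\<kappa>. (\<forall>j<m. \<kappa> j \<in> unit_ball_on X \<and> g j (\<kappa> j) > t j) \<longrightarrow> (\<Sum>j<m. l j *\<^sub>R \<kappa> j) \<in> U"
    by (rule weak_open_contains_slice_combinations[OF X(1) U(1) x0])
  define \<eta> where "\<eta> = min 1 (\<epsilon> / 3)"
  have \<eta>: "0 < \<eta>" "\<eta> \<le> 1" "3 * \<eta> \<le> \<epsilon>" using \<open>\<epsilon> > 0\<close> unfolding \<eta>_def by auto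
  obtain \<kappa> where \<kappa>: "\<forall>j<m. \<kappa> j \<in> unit_ball_on X \<and> g j (\<kappa> j) > t j"
    and big: "norm (y + (\<Sum>j<m. \<kappa> j)) \<ge> 1 + real m - \<eta>"
    using daugavet_slices_sum[OF X S y sl \<eta>(1,2)] by blast
  obtain \<psi> where \<psi>: "bounded_linear \<psi>" "\<And>x. \<bar>\<psi> x\<bar> \<le> norm x"
    and \<psi>y: "1 - \<eta> \<le> \<psi> y" and \<psi>\<kappa>: "\<forall>j<m. 1 - \<eta> \<le> \<psi> (\<kappa> j)"
    using norming_functional_of_sum[of y m \<kappa> \<eta>] y \<kappa> big by (auto simp: mem_unit_ball_on)
  define u where "u = (\<Sum>j<m. l j *\<^sub>R \<kappa> j)"
  have "u \<in> U" unfolding u_def using comb \<kappa> by blast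
  moreover have "u \<in> unit_ball_on X"
    unfolding u_def using l \<kappa> by (intro convex_sum convex_unit_ball_on X(1)) auto
  moreover have "(\<Sum>j<m. l j *\<^sub>R \<psi> (\<kappa> j)) \<in> {1 - \<eta>..}"
    using l \<psi>\<kappa> by (intro convex_sum) auto
  then have "\<psi> u \<ge> 1 - \<eta>"
    unfolding u_def using \<psi>(1) by (simp add: linear_sum linear_scale bounded_linear.linear)
  moreover define V where "V = U \<inter> {x\<in>X. \<psi> x \<in> {1 - 2 * \<eta><..}}"
  ultimately have "u \<in> V \<inter> unit_ball_on X" using \<eta>(1) by (auto simp: mem_unit_ball_on)
  moreover have "openin (weak_top X) V"
    unfolding V_def by (intro openin_Int U(1) weak_top_basic dual_on_bounded_linear \<psi>(1) open_greaterThan)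
  moreover have "norm (v + y) > 2 - \<epsilon>" if "v \<in> V" for v
  proof -
    have "\<psi> v + \<psi> y \<le> norm (v + y)"
      using \<psi>(1) \<psi>(2)[of "v + y"] by (simp add: linear_add bounded_linear.linear)
    then show ?thesis using that \<psi>y \<eta>(3) unfolding V_def by auto
  qed
  ultimately show "\<exists>V. openin (weak_top X) V \<and> V \<inter> unit_ball_on X \<noteq> {} \<and>
      V \<inter> unit_ball_on X \<subseteq> U \<inter> unit_ball_on X \<and> (\<forall>v\<in>V \<inter> unit_ball_on X. norm (v + y) > 2 - \<epsilon>)"
    unfolding V_def by blast
qed

lemma weak_open_imp_daugavet_slices:
  fixes X :: "'a::real_normed_vector set"
  assumes X: "subspace X" and B: "daugavet_weak_open X"
  shows "daugavet_slices X"
  unfolding daugavet_slices_def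
proof (intro allI impI ballI)
  fix \<epsilon> :: real and y :: 'a and xs
  assume "\<epsilon> > 0" and y: "norm y = 1" and xs: "xs \<in> dual_on X" "op_norm_on X xs = 1"
  define U where "U = {x\<in>X. xs x \<in> {1 - \<epsilon><..}}"
  have "openin (weak_top X) U" unfolding U_def by (rule weak_top_basic[OF xs(1)]) simp
  moreover have "U \<inter> unit_ball_on X \<noteq> {}"
    using dual_on_approx[OF X xs(1), of "1 - \<epsilon>"] xs(2) \<open>\<epsilon> > 0\<close> by (auto simp: U_def mem_unit_ball_on)
  ultimately obtain V where V: "V \<inter> unit_ball_on X \<noteq> {}" "V \<inter> unit_ball_on X \<subseteq> U \<inter> unit_ball_on X"
    "\<forall>v\<in>V \<inter> unit_ball_on X. norm (v + y) > 2 - \<epsilon>"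
    using B[unfolded daugavet_weak_open_def, rule_format, OF \<open>\<epsilon> > 0\<close> y] by meson
  then obtain v where "v \<in> V \<inter> unit_ball_on X" by blast
  then show "\<exists>x\<in>unit_ball_on X. xs x > 1 - \<epsilon> \<and> norm (x + y) > 2 - \<epsilon>"
    using V unfolding U_def by blast
qed

section \<open>Weak-star open subsets of the dual unit ball\<close>

lemma dual_unit_ball_convex_sum:
  fixes m :: nat
  assumes "\<forall>j<m. l j \<ge> 0" "(\<Sum>j<m. l j) = 1" "\<forall>j<m. \<kappa> j \<in> dual_unit_ball"
  shows "(\<lambda>y. \<Sum>j<m. l j * \<kappa> j y) \<in> dual_unit_ball"
proof -
  have "bounded_linear (\<lambda>y. \<Sum>j<m. l j * \<kappa> j y)"
    using assms(3) by (intro bounded_linear_sum bounded_linear_const_mult) (auto simp: mem_dual_unit_ball)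
  moreover have "(\<Sum>j<m. l j *\<^sub>R \<kappa> j y) \<in> {-norm y..norm y}" for y
  proof (rule convex_sum)
    fix j assume "j \<in> {..<m}"
    then have "\<bar>\<kappa> j y\<bar> \<le> norm y" using assms(3) by (simp add: mem_dual_unit_ball)
    then show "\<kappa> j y \<in> {-norm y..norm y}" by (simp add: abs_le_iff)
  qed (use assms(1,2) in auto)
  ultimately show ?thesis by (simp add: mem_dual_unit_ball abs_le_iff minus_le_iff)
qed

lemma normalized_weak_star_slice:
  fixes w :: "'a::real_normed_vector"
  assumes "(UNIV :: 'a set) \<noteq> {0}" and v0: "v0 \<in> dual_unit_ball" "v0 w > t"
  obtains y \<eta> where "norm y = 1" "\<eta> > 0" "\<And>v. v \<in> dual_unit_ball \<Longrightarrow> v y > 1 - \<eta> \<Longrightarrow> v w > t"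
proof (cases "w = 0")
  case True
  then have "v w = 0" if "v \<in> dual_unit_ball" for v
    using that by (simp add: mem_dual_unit_ball linear_0 bounded_linear.linear)
  then have "t < 0" using v0 by force
  obtain e :: 'a where "e \<noteq> 0" using assms(1) by blast
  then show ?thesis
    using that[of "(1 / norm e) *\<^sub>R e" 1] \<open>t < 0\<close> \<open>\<And>v. v \<in> dual_unit_ball \<Longrightarrow> v w = 0\<close> by force
next
  case False
  have "t < norm w" using v0 by (auto simp: mem_dual_unit_ball abs_le_iff intro: order.strict_trans2)
  show ?thesis
  proof (rule that)
    show "norm ((1 / norm w) *\<^sub>R w) = 1" using False by simp
    show "1 - t / norm w > 0" using False \<open>t < norm w\<close> by (simp add: field_simps)
  next
    fix v assume "v \<in> dual_unit_ball" "v ((1 / norm w) *\<^sub>R w) > 1 - (1 - t / norm w)"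
    then show "v w > t"
      using False by (simp add: mem_dual_unit_ball linear_scale bounded_linear.linear field_simps)
  qed
qed

lemma op_norm_on_add_scaled_ge:
  assumes X: "subspace X" and xs: "xs \<in> dual_on X" "op_norm_on X xs = 1" and v: "v \<in> dual_unit_ball"
    and "c \<ge> 0" and big: "op_norm_on X (\<lambda>x. v x + xs x) > 2 - e"
  shows "op_norm_on X (\<lambda>x. c * xs x + v x) \<ge> (1 + c) * (1 - e)"
proof -
  have v': "bounded_linear v" "\<And>x. \<bar>v x\<bar> \<le> norm x" using v by (auto simp: mem_dual_unit_ball)
  obtain x where x: "x \<in> unit_ball_on X" "v x + xs x > 2 - e"
    using dual_on_approx[OF X dual_on_add[OF dual_on_bounded_linear[OF v'(1)] xs(1)] big] by blast
  have "v x \<le> 1" "xs x \<le> 1"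
    using v'(2)[of x] x(1) dual_on_abs_le[OF xs(1) x(1)] xs(2) by (auto simp: mem_unit_ball_on)
  then have "1 - e \<le> v x" "c * (1 - e) \<le> c * xs x"
    using x(2) \<open>c \<ge> 0\<close> by (auto intro: mult_left_mono)
  then have "(1 + c) * (1 - e) \<le> c * xs x + v x" by (simp add: algebra_simps)
  also have "\<dots> \<le> op_norm_on X (\<lambda>x. c * xs x + v x)"
    using op_norm_on_upper[OF op_bounded_on_add[OF dual_on_op_bounded_on[OF dual_on_cmult[OF xs(1), of c]]
          op_bounded_on_bounded_linear[OF v'(1)]] x(1)] by (simp add: abs_le_iff)
  finally show ?thesis .
qed

lemma daugavet_dual_slices_step:
  fixes X :: "'a::real_normed_vector set"
  assumes X: "subspace X" and "(UNIV :: 'a set) \<noteq> {0}" and S: "daugavet_dual_slices X"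
    and \<phi>: "\<phi> \<in> dual_on X" "op_norm_on X \<phi> > 0" and v0: "v0 \<in> dual_unit_ball" "v0 w > t" and "\<epsilon> > 0"
  shows "\<exists>v\<in>dual_unit_ball. v w > t \<and> op_norm_on X (\<lambda>x. \<phi> x + v x) \<ge> op_norm_on X \<phi> + 1 - \<epsilon>"
proof -
  define n where "n = op_norm_on X \<phi>"
  define xs where "xs = (\<lambda>x. \<phi> x / n)"
  have "n > 0" using \<phi>(2) unfolding n_def .
  have xs: "xs \<in> dual_on X" "op_norm_on X xs = 1"
    using dual_on_normalize[OF X \<phi>] unfolding xs_def n_def by blast+
  obtain y \<eta> where y: "norm y = 1" "\<eta> > 0"
    and slice: "\<And>v. v \<in> dual_unit_ball \<Longrightarrow> v y > 1 - \<eta> \<Longrightarrow> v w > t"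
    using normalized_weak_star_slice[OF assms(2) v0] by blast
  define e where "e = min \<eta> (\<epsilon> / (1 + n))"
  have "e > 0" "e \<le> \<eta>" using \<open>\<eta> > 0\<close> \<open>\<epsilon> > 0\<close> \<open>n > 0\<close> unfolding e_def by auto
  have "(1 + n) * e \<le> \<epsilon>"
  proof -
    have "e \<le> \<epsilon> / (1 + n)" unfolding e_def by simp
    then show ?thesis using \<open>n > 0\<close> by (simp add: pos_le_divide_eq mult.commute)
  qed
  obtain v where v: "v \<in> dual_unit_ball" "v y > 1 - e" "op_norm_on X (\<lambda>x. v x + xs x) > 2 - e"
    using daugavet_dual_slicesD[OF S \<open>e > 0\<close> y(1) xs] by blast
  have "(1 + n) * (1 - e) \<le> op_norm_on X (\<lambda>x. n * xs x + v x)"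
    using op_norm_on_add_scaled_ge[OF X xs v(1) _ v(3)] \<open>n > 0\<close> by simp
  also have "(\<lambda>x. n * xs x + v x) = (\<lambda>x. \<phi> x + v x)"
    using \<open>n > 0\<close> unfolding xs_def by simp
  finally have "op_norm_on X \<phi> + 1 - \<epsilon> \<le> op_norm_on X (\<lambda>x. \<phi> x + v x)"
    using \<open>(1 + n) * e \<le> \<epsilon>\<close> unfolding n_def by (simp add: algebra_simps)
  moreover have "v w > t" using slice v \<open>e \<le> \<eta>\<close> by force
  ultimately show ?thesis using v(1) by blast
qed

lemma daugavet_dual_slices_sum:
  fixes X :: "'a::real_normed_vector set" and m :: nat and \<eta> :: real
  assumes X: "subspace X" "(UNIV :: 'a set) \<noteq> {0}" and S: "daugavet_dual_slices X"
    and xs: "xs \<in> dual_on X" "op_norm_on X xs = 1"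
  shows "\<forall>j<m. \<exists>v\<in>dual_unit_ball. v (w j) > t j \<Longrightarrow> 0 < \<eta> \<Longrightarrow> \<eta> \<le> 1 \<Longrightarrow>
    \<exists>\<kappa>. (\<forall>j<m. \<kappa> j \<in> dual_unit_ball \<and> \<kappa> j (w j) > t j) \<and>
      op_norm_on X (\<lambda>x. xs x + (\<Sum>j<m. \<kappa> j x)) \<ge> 1 + real m - \<eta>"
proof (induction m arbitrary: \<eta>)
  case 0
  then show ?case using xs by simp
next
  case (Suc m)
  obtain \<kappa> where \<kappa>: "\<forall>j<m. \<kappa> j \<in> dual_unit_ball \<and> \<kappa> j (w j) > t j"
    and big: "op_norm_on X (\<lambda>x. xs x + (\<Sum>j<m. \<kappa> j x)) \<ge> 1 + real m - \<eta> / 2"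
    using Suc.IH[of "\<eta> / 2"] Suc.prems by auto
  define \<phi> where "\<phi> = (\<lambda>x. xs x + (\<Sum>j<m. \<kappa> j x))"
  have "\<phi> \<in> dual_on X"
    unfolding \<phi>_def using \<kappa>
    by (intro dual_on_add[OF xs(1)] dual_on_bounded_linear bounded_linear_sum) (auto simp: mem_dual_unit_ball)
  moreover have "op_norm_on X \<phi> > 0" using big Suc.prems(3) unfolding \<phi>_def by auto
  moreover obtain v0 where "v0 \<in> dual_unit_ball" "v0 (w m) > t m"
    using Suc.prems(1) by blast
  ultimately obtain u where u: "u \<in> dual_unit_ball" "u (w m) > t m"
    "op_norm_on X (\<lambda>x. \<phi> x + u x) \<ge> op_norm_on X \<phi> + 1 - \<eta> / 2"
    using daugavet_dual_slices_step[OF X S] Suc.prems(2) by (metis half_gt_zero)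
  have "(\<Sum>j<m. (\<kappa>(m := u)) j x) = (\<Sum>j<m. \<kappa> j x)" for x by (rule sum.cong) auto
  then have "(\<lambda>x. xs x + (\<Sum>j<Suc m. (\<kappa>(m := u)) j x)) = (\<lambda>x. \<phi> x + u x)"
    unfolding \<phi>_def by (simp add: add.assoc)
  then show ?case
    using \<kappa> u big unfolding \<phi>_def by (intro exI[of _ "\<kappa>(m := u)"]) (auto simp: less_Suc_eq)
qed

lemma almost_norming_point_of_sum:
  fixes X :: "'a::real_normed_vector set" and m :: nat and \<eta> :: real
  assumes X: "subspace X" and xs: "xs \<in> dual_on X" "op_norm_on X xs = 1"
    and \<kappa>: "\<forall>j<m. \<kappa> j \<in> dual_unit_ball"
    and big: "1 + real m - \<eta> < op_norm_on X (\<lambda>x. xs x + (\<Sum>j<m. \<kappa> j x))"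
  obtains x where "x \<in> unit_ball_on X" "1 - \<eta> \<le> xs x" "\<forall>j<m. 1 - \<eta> \<le> \<kappa> j x"
proof -
  have "(\<lambda>x. xs x + (\<Sum>j<m. \<kappa> j x)) \<in> dual_on X"
    using \<kappa> by (intro dual_on_add[OF xs(1)] dual_on_bounded_linear bounded_linear_sum)
      (auto simp: mem_dual_unit_ball)
  then obtain x where x: "x \<in> unit_ball_on X" "1 + real m - \<eta> < xs x + (\<Sum>j<m. \<kappa> j x)"
    using dual_on_approx[OF X] big by blast
  have "xs x \<le> 1" using dual_on_abs_le[OF xs(1) x(1)] xs(2) by simp
  moreover have "\<forall>j<m. \<kappa> j x \<le> 1"
    using \<kappa> x(1) by (auto simp: mem_dual_unit_ball mem_unit_ball_on abs_le_iff intro: order_trans)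
  ultimately show ?thesis
    using sum_le_one_near_max[of "xs x" m "\<lambda>j. \<kappa> j x" \<eta>] x that by auto
qed

lemma weak_star_open_contains_slice_combinations:
  fixes U :: "('a::real_normed_vector \<Rightarrow> real) set"
  assumes U: "openin weak_star_top U" and v0: "v0 \<in> U" "v0 \<in> dual_unit_ball"
  obtains m :: nat and l w t where "\<forall>j<m. l j \<ge> 0" "(\<Sum>j<m. l j) = 1"
    "\<forall>j<m. \<exists>v\<in>dual_unit_ball. v (w j) > t j"
    "\<forall>\<kappa>. (\<forall>j<m. \<kappa> j \<in> dual_unit_ball \<and> \<kappa> j (w j) > t j) \<longrightarrow> (\<lambda>y. \<Sum>j<m. l j * \<kappa> j y) \<in> U"
proof -
  obtain I \<delta> where I: "finite I" "\<delta> > 0" and IU: "{v\<in>dual_space. \<forall>y\<in>I. \<bar>v y - v0 y\<bar> < \<delta>} \<subseteq> U"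
    using weak_star_top_nbhd[OF U v0(1)] by blast
  define M where "M = (\<Sum>y\<in>I. norm y)"
  have bnd: "\<forall>y\<in>I. \<forall>v\<in>dual_unit_ball. \<bar>v y\<bar> \<le> M"
  proof (intro ballI)
    fix y and v :: "'a \<Rightarrow> real" assume "y \<in> I" "v \<in> dual_unit_ball"
    then have "\<bar>v y\<bar> \<le> norm y" by (simp add: mem_dual_unit_ball)
    also have "\<dots> \<le> M" unfolding M_def using I(1) \<open>y \<in> I\<close> by (intro member_le_sum) auto
    finally show "\<bar>v y\<bar> \<le> M" .
  qed
  obtain m :: nat and l c t where l: "\<forall>j<m. l j \<ge> 0" "(\<Sum>j<m. l j) = 1"
    and sl: "\<forall>j<m. \<exists>v\<in>dual_unit_ball. (\<Sum>y\<in>I. c j y * v y) > t j"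
    and close: "\<forall>\<kappa>. (\<forall>j<m. \<kappa> j \<in> dual_unit_ball \<and> (\<Sum>y\<in>I. c j y * \<kappa> j y) > t j) \<longrightarrow>
       (\<forall>y\<in>I. \<bar>(\<Sum>j<m. l j * \<kappa> j y) - v0 y\<bar> < \<delta>)"
    by (rule approximation_by_small_slices[where p = "\<lambda>v. v", OF I(1) bnd v0(2) I(2)])
  define w where "w j = (\<Sum>y\<in>I. c j y *\<^sub>R y)" for j
  have vw: "v (w j) = (\<Sum>y\<in>I. c j y * v y)" if "v \<in> dual_unit_ball" for v :: "'a \<Rightarrow> real" and j
    using that unfolding w_def by (simp add: mem_dual_unit_ball linear_sum linear_scale bounded_linear.linear)
  show ?thesis
  proof (rule that[OF l])
    show "\<forall>j<m. \<exists>v\<in>dual_unit_ball. v (w j) > t j" using sl vw by auto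
  next
    show "\<forall>\<kappa>. (\<forall>j<m. \<kappa> j \<in> dual_unit_ball \<and> \<kappa> j (w j) > t j) \<longrightarrow> (\<lambda>y. \<Sum>j<m. l j * \<kappa> j y) \<in> U"
    proof (intro allI impI)
      fix \<kappa> assume \<kappa>: "\<forall>j<m. \<kappa> j \<in> dual_unit_ball \<and> \<kappa> j (w j) > t j"
      then have "\<forall>y\<in>I. \<bar>(\<Sum>j<m. l j * \<kappa> j y) - v0 y\<bar> < \<delta>" using close vw by auto
      moreover have "(\<lambda>y. \<Sum>j<m. l j * \<kappa> j y) \<in> dual_space"
        using dual_unit_ball_convex_sum[OF l] \<kappa> by (auto simp: dual_unit_ball_def)
      ultimately show "(\<lambda>y. \<Sum>j<m. l j * \<kappa> j y) \<in> U" using IU by blast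
    qed
  qed
qed

definition daugavet_weak_star_open :: "'y::real_normed_vector set \<Rightarrow> bool" where
  "daugavet_weak_star_open X \<longleftrightarrow> (\<forall>\<epsilon>>0. \<forall>xs\<in>dual_on X. op_norm_on X xs = 1 \<longrightarrow>
     (\<forall>U. openin weak_star_top U \<and> U \<inter> dual_unit_ball \<noteq> {} \<longrightarrow>
       (\<exists>V. openin weak_star_top V \<and> V \<inter> dual_unit_ball \<noteq> {} \<and>
            V \<inter> dual_unit_ball \<subseteq> U \<inter> dual_unit_ball \<and>
            (\<forall>v\<in>V \<inter> dual_unit_ball. op_norm_on X (\<lambda>x. v x + xs x) > 2 - \<epsilon>))))"

lemma daugavet_dual_slices_imp_weak_star_open:
  fixes X :: "'a::real_normed_vector set"
  assumes X: "subspace X" "X \<noteq> {0}" and S: "daugavet_dual_slices X"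
  shows "daugavet_weak_star_open X"
  unfolding daugavet_weak_star_open_def
proof (intro allI impI ballI, elim conjE)
  fix \<epsilon> :: real and xs :: "'a \<Rightarrow> real" and U :: "('a \<Rightarrow> real) set"
  assume "\<epsilon> > 0" and xs: "xs \<in> dual_on X" "op_norm_on X xs = 1"
    and U: "openin weak_star_top U" "U \<inter> dual_unit_ball \<noteq> {}"
  obtain x1 where "x1 \<in> X" "x1 \<noteq> 0" using X subspace_0 by blast
  then have nontriv: "(UNIV :: 'a set) \<noteq> {0}" by blast
  obtain v0 where v0: "v0 \<in> U" "v0 \<in> dual_unit_ball" using U(2) by blast
  obtain m :: nat and l w t where l: "\<forall>j<m. l j \<ge> 0" "(\<Sum>j<m. l j) = 1"
    and sl: "\<forall>j<m. \<exists>v\<in>dual_unit_ball. v (w j) > t j"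
    and comb: "\<forall>\<kappa>. (\<forall>j<m. \<kappa> j \<in> dual_unit_ball \<and> \<kappa> j (w j) > t j) \<longrightarrow> (\<lambda>y. \<Sum>j<m. l j * \<kappa> j y) \<in> U"
    by (rule weak_star_open_contains_slice_combinations[OF U(1) v0])
  define \<eta> where "\<eta> = min 1 (\<epsilon> / 5)"
  have \<eta>: "0 < \<eta>" "\<eta> \<le> 1" "5 * \<eta> \<le> \<epsilon>" using \<open>\<epsilon> > 0\<close> unfolding \<eta>_def by auto
  obtain \<kappa> where \<kappa>: "\<forall>j<m. \<kappa> j \<in> dual_unit_ball \<and> \<kappa> j (w j) > t j"
    and big: "op_norm_on X (\<lambda>x. xs x + (\<Sum>j<m. \<kappa> j x)) \<ge> 1 + real m - \<eta>"
    using daugavet_dual_slices_sum[OF X(1) nontriv S xs sl \<eta>(1,2)] by blast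
  obtain x where x: "x \<in> unit_ball_on X" and xs_x: "1 - 2 * \<eta> \<le> xs x"
    and \<kappa>_x: "\<forall>j<m. 1 - 2 * \<eta> \<le> \<kappa> j x"
    using almost_norming_point_of_sum[OF X(1) xs, of m \<kappa> "2 * \<eta>"] \<kappa> big \<eta>(1) by auto
  define u where "u = (\<lambda>y. \<Sum>j<m. l j * \<kappa> j y)"
  have "u \<in> U" unfolding u_def using comb \<kappa> by blast
  moreover have "u \<in> dual_unit_ball" unfolding u_def using dual_unit_ball_convex_sum[OF l] \<kappa> by blast
  moreover have "(\<Sum>j<m. l j *\<^sub>R \<kappa> j x) \<in> {1 - 2 * \<eta>..}"
    using l \<kappa>_x by (intro convex_sum) auto
  then have "u x \<ge> 1 - 2 * \<eta>" unfolding u_def by simp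
  moreover define V where "V = U \<inter> {v\<in>dual_space. v x \<in> {1 - 3 * \<eta><..}}"
  ultimately have "u \<in> V \<inter> dual_unit_ball" using \<eta>(1) by (auto simp: dual_unit_ball_def)
  moreover have "openin weak_star_top V"
    unfolding V_def by (intro openin_Int U(1) weak_star_top_basic open_greaterThan)
  moreover have "op_norm_on X (\<lambda>x. v x + xs x) > 2 - \<epsilon>" if "v \<in> V \<inter> dual_unit_ball" for v
  proof -
    have "bounded_linear v" using that by (simp add: mem_dual_unit_ball)
    then have "\<bar>v x + xs x\<bar> \<le> op_norm_on X (\<lambda>x. v x + xs x)"
      using op_norm_on_upper[OF op_bounded_on_add[OF op_bounded_on_bounded_linear
            dual_on_op_bounded_on[OF xs(1)]] x(1)] by simp
    then show ?thesis using that xs_x \<eta>(3) unfolding V_def by auto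
  qed
  ultimately show "\<exists>V. openin weak_star_top V \<and> V \<inter> dual_unit_ball \<noteq> {} \<and>
      V \<inter> dual_unit_ball \<subseteq> U \<inter> dual_unit_ball \<and>
      (\<forall>v\<in>V \<inter> dual_unit_ball. op_norm_on X (\<lambda>x. v x + xs x) > 2 - \<epsilon>)"
    unfolding V_def by blast
qed

lemma weak_star_open_imp_daugavet_dual_slices:
  fixes X :: "'a::real_normed_vector set"
  assumes C: "daugavet_weak_star_open X"
  shows "daugavet_dual_slices X"
  unfolding daugavet_dual_slices_def
proof (intro allI impI ballI)
  fix \<epsilon> :: real and y :: 'a and xs
  assume "\<epsilon> > 0" and y: "norm y = 1" and xs: "xs \<in> dual_on X" "op_norm_on X xs = 1"
  define U where "U = {v\<in>dual_space. v y \<in> {1 - \<epsilon><..}}"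
  have U: "openin weak_star_top U" unfolding U_def by (rule weak_star_top_basic) simp
  obtain \<psi> where \<psi>: "bounded_linear \<psi>" "\<And>x. \<bar>\<psi> x\<bar> \<le> norm x" "\<psi> y = norm y"
    using exists_norming_functional[of y] by blast
  then have "\<psi> \<in> U \<inter> dual_unit_ball"
    using y \<open>\<epsilon> > 0\<close> by (auto simp: U_def mem_dual_unit_ball dual_space_def)
  then have "U \<inter> dual_unit_ball \<noteq> {}" by blast
  then obtain V where V: "V \<inter> dual_unit_ball \<noteq> {}" "V \<inter> dual_unit_ball \<subseteq> U \<inter> dual_unit_ball"
    "\<forall>v\<in>V \<inter> dual_unit_ball. op_norm_on X (\<lambda>x. v x + xs x) > 2 - \<epsilon>"
    using C[unfolded daugavet_weak_star_open_def, rule_format, OF \<open>\<epsilon> > 0\<close> xs conjI[OF U]] by meson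
  then obtain v where "v \<in> V \<inter> dual_unit_ball" by blast
  then show "\<exists>v\<in>dual_unit_ball. v y > 1 - \<epsilon> \<and> op_norm_on X (\<lambda>x. v x + xs x) > 2 - \<epsilon>"
    using V unfolding U_def by blast
qed

theorem mainTheorem1:
  fixes X :: "'y::banach set"
  assumes "subspace X" and "closed X" and "X \<noteq> {0}"
  shows "(daugavet_pair X \<longleftrightarrow>
           (\<forall>\<epsilon>>0. \<forall>y. norm y = 1 \<longrightarrow>
              (\<forall>U. openin (weak_top X) U \<and> U \<inter> unit_ball_on X \<noteq> {} \<longrightarrow>
                (\<exists>V. openin (weak_top X) V \<and> V \<inter> unit_ball_on X \<noteq> {} \<and>
                     V \<inter> unit_ball_on X \<subseteq> U \<inter> unit_ball_on X \<and>
                     (\<forall>v\<in>V \<inter> unit_ball_on X. norm (v + y) > 2 - \<epsilon>)))))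
       \<and> (daugavet_pair X \<longleftrightarrow>
           (\<forall>\<epsilon>>0. \<forall>xs\<in>dual_on X. op_norm_on X xs = 1 \<longrightarrow>
              (\<forall>U. openin weak_star_top U \<and> U \<inter> dual_unit_ball \<noteq> {} \<longrightarrow>
                (\<exists>V. openin weak_star_top V \<and> V \<inter> dual_unit_ball \<noteq> {} \<and>
                     V \<inter> dual_unit_ball \<subseteq> U \<inter> dual_unit_ball \<and>
                     (\<forall>v\<in>V \<inter> dual_unit_ball. op_norm_on X (\<lambda>x. v x + xs x) > 2 - \<epsilon>)))))"
proof -
  have slices: "daugavet_pair X \<longleftrightarrow> daugavet_slices X"
    using daugavet_pair_imp_slices slices_imp_daugavet_pair assms(1) by blast
  have dual_slices: "daugavet_slices X \<longleftrightarrow> daugavet_dual_slices X"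
    using daugavet_slices_imp_dual_slices daugavet_dual_slices_imp_slices[OF assms(1)] by blast
  have "daugavet_pair X \<longleftrightarrow> daugavet_weak_open X"
    using slices daugavet_slices_imp_weak_open[OF assms(1,3)] weak_open_imp_daugavet_slices[OF assms(1)]
    by blast
  moreover have "daugavet_pair X \<longleftrightarrow> daugavet_weak_star_open X"
    using slices dual_slices daugavet_dual_slices_imp_weak_star_open[OF assms(1,3)]
      weak_star_open_imp_daugavet_dual_slices
    by blast
  ultimately show ?thesis
    unfolding daugavet_weak_open_def daugavet_weak_star_open_def by (rule conjI)
qed

end
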